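(* Let $\mathcal H$ be a real Hilbert space. Let $\Psi: \mathcal H \to \mathbb R \cup \{+\infty\}$ be proper, lower-semicontinuous and convex, and let $\Phi: \mathcal H \to \mathbb R$ be convex and continuously differentiable with $L$-Lipschitz continuous gradient. Suppose that $S=\operatorname{argmin}(\Psi+\Phi)\neq\emptyset$. Let $\alpha>3$ and $0<s<\frac1L$, let $(g_k)$ be a sequence in $\mathcal H$, and let $(x_k)$ be generated by the inexact scheme: given arbitrary $x_0,x_1\in\mathcal H$, for $k\ge1$, $$y_k = x_k + \frac{k-1}{k+\alpha-1}(x_k-x_{k-1}),\qquad x_{k+1} = \operatorname{prox}_{s\Psi}\big(y_k - s(\nabla\Phi(y_k) - g_k)\big).$$ If $\sum_{k=1}^\infty k\|g_k\|<+\infty$, then $$\lim_{k\to\infty}k^2\Big((\Psi+\Phi)(x_k)-\min(\Psi+\Phi)\Big)=0,\qquad \lim_{k\to\infty}k\|x_{k+1}-x_k\|=0,$$ and $(x_k)$ converges weakly to a point in $S$.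
   Context: $\operatorname{prox}_{s\Psi}(z) = \operatorname{argmin}_{u\in\mathcal H}\{\Psi(u) + \frac{1}{2s}\|u-z\|^2\}$ denotes the proximal operator. *)

theory Defs
  imports "HOL-Analysis.Analysis"
begin

definition proper_fun :: "('a \<Rightarrow> ereal) \<Rightarrow> bool" where
  "proper_fun f \<longleftrightarrow> (\<forall>x. f x \<noteq> -\<infinity>) \<and> (\<exists>x. f x \<noteq> \<infinity>)"

definition lsc_fun :: "('a::topological_space \<Rightarrow> ereal) \<Rightarrow> bool" where
  "lsc_fun f \<longleftrightarrow> (\<forall>x. f x \<le> Liminf (at x) f)"

definition convex_ereal_fun :: "('a::real_vector \<Rightarrow> ereal) \<Rightarrow> bool" where
  "convex_ereal_fun f \<longleftrightarrow>
     (\<forall>x y t. 0 \<le> t \<and> t \<le> 1 \<longrightarrow>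
        f ((1 - t) *\<^sub>R x + t *\<^sub>R y) \<le> ereal (1 - t) * f x + ereal t * f y)"

definition prox :: "real \<Rightarrow> ('a::real_normed_vector \<Rightarrow> ereal) \<Rightarrow> 'a \<Rightarrow> 'a" where
  "prox s f z = (THE u. \<forall>v. f u + ereal (norm (u - z)^2 / (2 * s))
                              \<le> f v + ereal (norm (v - z)^2 / (2 * s)))"

definition weakly_converges :: "(nat \<Rightarrow> 'a::real_inner) \<Rightarrow> 'a \<Rightarrow> bool" where
  "weakly_converges x a \<longleftrightarrow> (\<forall>y. (\<lambda>k. x k \<bullet> y) \<longlonglongrightarrow> a \<bullet> y)"

end

theory Submission
  imports Defs
begin

text \<open>
  With \<open>\<tau> k = (k + \<alpha> - 2) / (\<alpha> - 1)\<close>, \<open>U k = x (k - 1) + \<tau> k (x k - x (k - 1))\<close> and a minimizer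
  \<open>z\<close>, the energy \<open>\<tau> k\<^sup>2 (F (x k) - min F) + \<parallel>U k - z\<parallel>\<^sup>2 / (2 s)\<close> decreases by at least
  \<open>\<rho> k (F (x k) - min F)\<close>, where \<open>\<rho> k \<ge> (\<alpha> - 3) k / (\<alpha> - 1)\<^sup>2\<close>, up to the error term
  \<open>\<tau> (k + 1) \<parallel>g k\<parallel> \<parallel>U (k + 1) - z\<parallel>\<close>. A discrete Gronwall argument bounds \<open>\<parallel>U k - z\<parallel>\<close>, so the
  energy converges and \<open>\<Sum> k (F (x k) - min F) < \<infinity>\<close>. A second energy, weighted by
  \<open>(k + \<alpha> - 1)\<^sup>2\<close>, gives \<open>\<Sum> k \<parallel>x (k + 1) - x k\<parallel>\<^sup>2 < \<infinity>\<close>. Hence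
  \<open>k\<^sup>2 (F (x k) - min F + \<parallel>x k - x (k - 1)\<parallel>\<^sup>2 / (2 s))\<close> converges, and since the same quantity
  weighted by \<open>k\<close> instead of \<open>k\<^sup>2\<close> is summable, the limit is \<open>0\<close>. Weak convergence follows from
  Opial's lemma: \<open>\<parallel>x k - z\<parallel>\<close> converges for every minimizer \<open>z\<close>, and weak cluster points lie in
  every closed convex sublevel set \<open>{F \<le> min F + \<epsilon>}\<close>, so they are minimizers.
\<close>

section \<open>Real sequences\<close>

lemma le_of_le_add_small_multiple:
  fixes a b c :: real
  assumes "\<And>t. 0 < t \<Longrightarrow> t \<le> 1 \<Longrightarrow> a \<le> b + t * c"
  shows "a \<le> b"
proof (rule LIMSEQ_le_const)
  have "(\<lambda>n. b + inverse (real (Suc n)) * c) \<longlonglongrightarrow> b + 0 * c"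
    by (intro tendsto_intros LIMSEQ_inverse_real_of_nat)
  then show "(\<lambda>n. b + inverse (real (Suc n)) * c) \<longlonglongrightarrow> b" by simp
  show "\<exists>N. \<forall>n\<ge>N. a \<le> b + inverse (real (Suc n)) * c"
    by (intro exI[of _ 0] allI impI assms) (auto simp: field_simps)
qed

lemma convergent_quasi_decreasing:
  fixes a e :: "nat \<Rightarrow> real"
  assumes a_nonneg: "\<And>k. N \<le> k \<Longrightarrow> 0 \<le> a k" and step: "\<And>k. N \<le> k \<Longrightarrow> a (Suc k) \<le> a k + e k"
    and e: "summable e" and e_nonneg: "\<And>k. N \<le> k \<Longrightarrow> 0 \<le> e k"
  shows "convergent a"
proof -
  have e': "summable (\<lambda>j. e (j + N))" using e by simp
  define b where "b k = a (k + N) - (\<Sum>j<k. e (j + N))" for k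
  have "decseq b" unfolding decseq_Suc_iff b_def using step by (auto simp: algebra_simps)
  moreover have "- (\<Sum>j. e (j + N)) \<le> b k" for k
    using sum_le_suminf[OF e', of "{..<k}"] e_nonneg a_nonneg[of "k + N"] by (auto simp: b_def)
  ultimately obtain l where "b \<longlonglongrightarrow> l" using decseq_convergent by blast
  then have "(\<lambda>k. b k + (\<Sum>j<k. e (j + N))) \<longlonglongrightarrow> l + (\<Sum>j. e (j + N))"
    by (intro tendsto_add summable_LIMSEQ e')
  then have "convergent (\<lambda>k. a (k + N))" unfolding b_def convergent_def by auto
  then show ?thesis by (simp add: convergent_ignore_initial_segment)
qed

lemma quasi_decreasing_le:
  fixes E c e :: "nat \<Rightarrow> real"
  assumes step: "\<And>k. E (Suc k) + c k \<le> E k + e k"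
  shows "E n + (\<Sum>k<n. c k) \<le> E 0 + (\<Sum>k<n. e k)"
proof (induction n)
  case (Suc n)
  then show ?case using step[of n] by simp
qed simp

lemma summable_dissipation:
  fixes E c e :: "nat \<Rightarrow> real"
  assumes step: "\<And>k. N \<le> k \<Longrightarrow> E (Suc k) + c k \<le> E k + e k"
    and c_nonneg: "\<And>k. N \<le> k \<Longrightarrow> 0 \<le> c k" and E_nonneg: "\<And>k. N \<le> k \<Longrightarrow> 0 \<le> E k"
    and e: "summable e" and e_nonneg: "\<And>k. N \<le> k \<Longrightarrow> 0 \<le> e k"
  shows "summable c"
proof -
  have e': "summable (\<lambda>k. e (k + N))" using e by simp
  have "summable (\<lambda>k. c (k + N))"
  proof (rule bounded_imp_summable)
    fix n
    have "(\<Sum>k\<le>n. c (k + N)) \<le> E N + (\<Sum>k<Suc n. e (k + N))"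
      using quasi_decreasing_le[of "\<lambda>k. E (k + N)" "\<lambda>k. c (k + N)" "\<lambda>k. e (k + N)" "Suc n"]
        step E_nonneg[of "Suc n + N"] by (simp add: lessThan_Suc_atMost)
    also have "\<dots> \<le> E N + (\<Sum>k. e (k + N))"
      using sum_le_suminf[OF e', of "{..<Suc n}"] e_nonneg by simp
    finally show "(\<Sum>k\<le>n. c (k + N)) \<le> E N + (\<Sum>k. e (k + N))" .
  qed (use c_nonneg in auto)
  then show ?thesis by simp
qed

lemma summable_le_const_mult:
  fixes f g :: "nat \<Rightarrow> real"
  assumes "summable g" and "\<And>n. N \<le> n \<Longrightarrow> 0 \<le> f n \<and> f n \<le> c * g n"
  shows "summable f"
  by (rule summable_comparison_test'[OF summable_mult[OF assms(1), of c], of N]) (use assms(2) in auto)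

lemma sqrt_gronwall_bound:
  fixes R b :: "nat \<Rightarrow> real" and C :: real
  assumes R_nonneg: "\<And>k. 0 \<le> R k" and b_nonneg: "\<And>k. 0 \<le> b k" and b: "summable b"
    and C: "0 \<le> C"
    and bound: "\<And>k. (R k)^2 \<le> C + (\<Sum>j<k. b j * R (Suc j))"
  shows "R k \<le> suminf b + sqrt C"
proof (induction k rule: less_induct)
  case (less k)
  define M where "M = max (suminf b + sqrt C) (R k)"
  have M_nonneg: "0 \<le> M" using R_nonneg[of k] by (simp add: M_def le_max_iff_disj)
  have "(\<Sum>j<k. b j * R (Suc j)) \<le> (\<Sum>j<k. b j * M)"
  proof (intro sum_mono mult_left_mono)
    fix j assume "j \<in> {..<k}"
    then show "R (Suc j) \<le> M"
      using less[of "Suc j"] by (cases "Suc j = k") (auto simp: M_def)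
  qed (use b_nonneg in auto)
  also have "\<dots> \<le> suminf b * M"
    using sum_le_suminf[OF b, of "{..<k}"] b_nonneg M_nonneg
    by (simp add: sum_distrib_right[symmetric] mult_right_mono)
  finally have R_sq: "(R k)^2 \<le> C + suminf b * M" using bound[of k] by linarith
  show ?case
  proof (rule ccontr)
    assume "\<not> R k \<le> suminf b + sqrt C"
    then have M: "M = R k" and gt: "R k > suminf b + sqrt C" by (auto simp: M_def)
    have "0 \<le> suminf b" using b b_nonneg by (simp add: suminf_nonneg)
    then have "sqrt C < R k" using gt by linarith
    have "C = sqrt C * sqrt C" using C by simp
    also have "\<dots> \<le> sqrt C * R k"
      using \<open>sqrt C < R k\<close> C by (intro mult_left_mono) auto
    finally have "C \<le> sqrt C * R k" .
    moreover have "0 < R k" using \<open>sqrt C < R k\<close> real_sqrt_ge_zero[OF C] by linarith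
    then have "R k * (suminf b + sqrt C) < R k * R k"
      using gt by (intro mult_strict_left_mono)
    ultimately show False using R_sq M by (simp add: power2_eq_square algebra_simps)
  qed
qed

text \<open>Otherwise \<open>k V k\<close> would eventually dominate a multiple of the harmonic series.\<close>
lemma sq_weighted_limit_eq_0:
  fixes V :: "nat \<Rightarrow> real"
  assumes V_nonneg: "\<And>k. N \<le> k \<Longrightarrow> 0 \<le> V k" and summable: "summable (\<lambda>k. real k * V k)"
    and lim: "(\<lambda>k. (real k)^2 * V k) \<longlonglongrightarrow> l"
  shows "l = 0"
proof (rule ccontr)
  assume "l \<noteq> 0"
  moreover have "l \<ge> 0" using V_nonneg by (intro LIMSEQ_le_const[OF lim] exI[of _ N]) auto
  ultimately have l: "l > 0" by simp
  have "eventually (\<lambda>k. (real k)^2 * V k > l / 2) sequentially"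
    using lim l by (intro order_tendstoD(1)) auto
  then have "eventually (\<lambda>k. norm (l / 2 * inverse (real k)) \<le> real k * V k) sequentially"
    using eventually_gt_at_top[of "0::nat"]
  proof eventually_elim
    case (elim k)
    then have "l / 2 \<le> real k * (real k * V k)" by (simp add: power2_eq_square)
    then show ?case using elim l by (simp add: field_simps)
  qed
  then have "summable (\<lambda>k. l / 2 * inverse (real k))"
    by (rule summable_comparison_test_ev[OF _ summable])
  then have "summable (\<lambda>k. inverse (real k) :: real)"
    using l summable_mult[of "\<lambda>k. l / 2 * inverse (real k)" "2 / l"] by simp
  then show False using not_summable_harmonic[where 'a=real] by simp
qed

section \<open>Smooth convex functions\<close>

lemma has_real_derivative_along_line:
  fixes \<Phi> :: "'a::real_inner \<Rightarrow> real"
  assumes grad: "\<And>u. (\<Phi> has_derivative (\<lambda>h. G u \<bullet> h)) (at u)"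
  shows "((\<lambda>t. \<Phi> (u + t *\<^sub>R d)) has_real_derivative (G (u + t *\<^sub>R d) \<bullet> d)) (at t)"
proof -
  have "((\<lambda>t. u + t *\<^sub>R d) has_derivative (\<lambda>h. h *\<^sub>R d)) (at t)"
    by (auto intro!: derivative_eq_intros)
  from has_derivative_compose[OF this grad]
  have "((\<lambda>t. \<Phi> (u + t *\<^sub>R d)) has_derivative (\<lambda>h. (G (u + t *\<^sub>R d) \<bullet> d) * h)) (at t)"
    by (simp add: mult.commute)
  then show ?thesis by (simp add: has_field_derivative_def)
qed

lemma convex_on_gradient_inequality:
  fixes \<Phi> :: "'a::real_inner \<Rightarrow> real"
  assumes cvx: "convex_on UNIV \<Phi>" and grad: "\<And>u. (\<Phi> has_derivative (\<lambda>h. G u \<bullet> h)) (at u)"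
  shows "\<Phi> u + G u \<bullet> (v - u) \<le> \<Phi> v"
proof -
  define h where "h t = \<Phi> (u + t *\<^sub>R (v - u))" for t
  have "convex_on UNIV h"
    unfolding convex_on_def h_def
  proof (intro conjI convex_UNIV ballI allI impI)
    fix a b p q :: real assume pq: "0 \<le> p" "0 \<le> q" "p + q = 1"
    have "u + (p *\<^sub>R a + q *\<^sub>R b) *\<^sub>R (v - u) = p *\<^sub>R (u + a *\<^sub>R (v - u)) + q *\<^sub>R (u + b *\<^sub>R (v - u))"
      using pq by (simp add: algebra_simps flip: scaleR_add_left)
    then show "\<Phi> (u + (p *\<^sub>R a + q *\<^sub>R b) *\<^sub>R (v - u)) \<le> p * \<Phi> (u + a *\<^sub>R (v - u)) + q * \<Phi> (u + b *\<^sub>R (v - u))"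
      using cvx pq unfolding convex_on_def by simp
  qed
  moreover have "(h has_real_derivative (G u \<bullet> (v - u))) (at 0)"
    using has_real_derivative_along_line[OF grad, of u "v - u" 0] by (simp add: h_def[abs_def])
  ultimately have "h 1 - h 0 \<ge> (G u \<bullet> (v - u)) * (1 - 0)"
    by (intro convex_on_imp_above_tangent) auto
  then show ?thesis by (simp add: h_def)
qed

lemma descent_lemma:
  fixes \<Phi> :: "'a::real_inner \<Rightarrow> real"
  assumes grad: "\<And>u. (\<Phi> has_derivative (\<lambda>h. G u \<bullet> h)) (at u)"
    and Lip: "\<And>u v. norm (G u - G v) \<le> L * norm (u - v)"
  shows "\<Phi> v \<le> \<Phi> u + G u \<bullet> (v - u) + L / 2 * (norm (v - u))^2"
proof -
  define d where "d = v - u"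
  define q where "q t = \<Phi> (u + t *\<^sub>R d) - t * (G u \<bullet> d) - L / 2 * t^2 * (norm d)^2" for t
  have "q 1 \<le> q 0"
  proof (rule DERIV_nonpos_imp_nonincreasing[of 0 1 q])
    fix t :: real assume t: "0 \<le> t" "t \<le> 1"
    have "(q has_real_derivative (G (u + t *\<^sub>R d) - G u) \<bullet> d - L * t * (norm d)^2) (at t)"
      unfolding q_def inner_diff_left
      by (rule derivative_eq_intros has_real_derivative_along_line[OF grad] refl | simp)+
    moreover have "(G (u + t *\<^sub>R d) - G u) \<bullet> d \<le> L * norm (t *\<^sub>R d) * norm d"
      using norm_cauchy_schwarz[of "G (u + t *\<^sub>R d) - G u" d] Lip[of "u + t *\<^sub>R d" u]
      by (smt (verit) mult_right_mono norm_ge_zero add_diff_cancel_left')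
    ultimately show "\<exists>y. (q has_real_derivative y) (at t) \<and> y \<le> 0"
      using t by (auto simp: power2_eq_square)
  qed simp
  then show ?thesis by (simp add: q_def d_def)
qed

section \<open>The proximal operator\<close>

lemma lsc_fun_seq_le:
  fixes f :: "'a::metric_space \<Rightarrow> ereal"
  assumes lsc: "lsc_fun f" and v: "v \<longlonglongrightarrow> p" and le: "\<And>n. f (v n) \<le> ereal (c n)"
    and c: "c \<longlonglongrightarrow> l"
  shows "f p \<le> ereal l"
proof (rule ccontr)
  assume "\<not> f p \<le> ereal l"
  then have "ereal l < f p" by simp
  then obtain z :: real where "ereal l < ereal z" "ereal z < f p"
    using ereal_dense2 by blast
  then have z: "l < z" "ereal z < f p" by simp_all
  have "ereal z < Liminf (at p) f" using z(2) lsc unfolding lsc_fun_def by (meson order_less_le_trans)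
  then have "eventually (\<lambda>u. f u > ereal z) (at p)" by (rule less_LiminfD)
  then have "eventually (\<lambda>u. u \<noteq> p \<longrightarrow> f u > ereal z) (nhds p)" by (simp add: eventually_at_filter)
  then have "eventually (\<lambda>n. v n \<noteq> p \<longrightarrow> f (v n) > ereal z) sequentially"
    using v unfolding filterlim_iff by blast
  moreover have "eventually (\<lambda>n. c n < z) sequentially" using c z(1) by (rule order_tendstoD(2))
  ultimately have "eventually (\<lambda>n. False) sequentially"
  proof eventually_elim
    case (elim n)
    have "f (v n) < ereal z" using le[of n] elim(2) by (simp add: order_le_less_trans)
    then show ?case using elim(1) z(2) by (cases "v n = p") auto
  qed
  then show False by simp
qed

lemma power2_norm_add:
  fixes a b :: "'a::real_inner"
  shows "(norm (a + b))^2 = (norm a)^2 + 2 * (a \<bullet> b) + (norm b)^2"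
  by (simp add: power2_norm_eq_inner inner_add_left inner_add_right inner_commute)

lemma norm_midpoint_sq:
  fixes a b w :: "'a::real_inner"
  shows "(norm ((1/2) *\<^sub>R a + (1/2) *\<^sub>R b - w))^2
    = (norm (a - w))^2 / 2 + (norm (b - w))^2 / 2 - (norm (a - b))^2 / 4"
  by (simp add: power2_norm_eq_inner inner_simps algebra_simps field_simps)

lemma Cauchy_if_norm_diff_sq_le:
  fixes p :: "nat \<Rightarrow> 'a::real_normed_vector"
  assumes a: "a \<longlonglongrightarrow> 0" and le: "\<And>n m. n \<le> m \<Longrightarrow> (norm (p n - p m))^2 \<le> a n + a m"
  shows "Cauchy p"
proof (rule metric_CauchyI)
  fix e :: real assume e: "0 < e"
  then obtain N where N: "\<And>n. n \<ge> N \<Longrightarrow> a n < e^2 / 2"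
    using order_tendstoD(2)[OF a, of "e^2 / 2"] by (auto simp: eventually_sequentially)
  have "dist (p m) (p n) < e" if "N \<le> n" "n \<le> m" for m n
  proof -
    have "a n + a m < e^2" using N[of n] N[of m] that by simp
    then have "(norm (p n - p m))^2 < e^2" using le[OF \<open>n \<le> m\<close>] by linarith
    then show ?thesis using e by (simp add: dist_norm norm_minus_commute power_less_imp_less_base)
  qed
  then show "\<exists>N. \<forall>m\<ge>N. \<forall>n\<ge>N. dist (p m) (p n) < e"
    by (metis dist_commute nat_le_linear)
qed

definition prox_obj :: "real \<Rightarrow> ('a::real_normed_vector \<Rightarrow> ereal) \<Rightarrow> 'a \<Rightarrow> 'a \<Rightarrow> ereal" where
  "prox_obj s f z u = f u + ereal ((norm (u - z))^2 / (2 * s))"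

lemma prox_eq_THE_prox_obj: "prox s f z = (THE u. \<forall>v. prox_obj s f z u \<le> prox_obj s f z v)"
  by (simp add: prox_def prox_obj_def)

lemma prox_obj_eq_ereal:
  assumes "prox_obj s f z u = ereal r" "f u \<noteq> -\<infinity>"
  shows "f u = ereal (r - (norm (u - z))^2 / (2 * s))"
  using assms by (cases "f u") (auto simp: prox_obj_def)

lemma prox_obj_bounded_below:
  fixes f :: "'a::real_inner \<Rightarrow> ereal"
  assumes s: "0 < s" and lower: "\<And>v. ereal (A - B * norm v - C * (norm v)^2) \<le> f v"
    and C: "C < 1 / (2 * s)"
  shows "\<exists>\<mu>. \<forall>v. ereal \<mu> \<le> prox_obj s f w v"
proof -
  define a where "a = 1 / (2 * s) - C"
  define b where "b = B + norm w / s"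
  have a: "a > 0" using C by (simp add: a_def)
  text \<open>Complete the square in \<open>r = \<parallel>v\<parallel>\<close>, using \<open>\<parallel>v - w\<parallel> \<ge> \<bar>r - \<parallel>w\<parallel>\<bar>\<close>.\<close>
  have "ereal (A + (norm w)^2 / (2 * s) - b^2 / (4 * a)) \<le> prox_obj s f w v" for v
  proof -
    define r where "r = norm v"
    have "0 \<le> (2 * a * r - b)^2 / (4 * a)" using a by simp
    also have "(2 * a * r - b)^2 / (4 * a) = a * r^2 - b * r + b^2 / (4 * a)"
      using a by (simp add: field_simps power2_eq_square)
    also have "a * r^2 - b * r = - B * r - C * r^2 + (r - norm w)^2 / (2 * s) - (norm w)^2 / (2 * s)"
      using s by (simp add: a_def b_def field_simps power2_eq_square)
    also have "(r - norm w)^2 \<le> (norm (v - w))^2"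
      unfolding r_def by (metis abs_ge_zero norm_triangle_ineq3 power2_abs power_mono)
    finally have "A + (norm w)^2 / (2 * s) - b^2 / (4 * a) \<le> (A - B * r - C * r^2) + (norm (v - w))^2 / (2 * s)"
      using s by (simp add: divide_right_mono)
    then have "ereal (A + (norm w)^2 / (2 * s) - b^2 / (4 * a))
        \<le> ereal (A - B * r - C * r^2) + ereal ((norm (v - w))^2 / (2 * s))" by simp
    also have "\<dots> \<le> prox_obj s f w v" unfolding prox_obj_def r_def by (intro add_right_mono lower)
    finally show ?thesis .
  qed
  then show ?thesis by blast
qed

text \<open>Strong convexity of the objective: near-minimal points are close to each other.\<close>
lemma prox_obj_midpoint:
  fixes f :: "'a::real_inner \<Rightarrow> ereal"
  assumes cvx: "convex_ereal_fun f" and s: "0 < s" and ninf: "\<And>u. f u \<noteq> -\<infinity>"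
    and lower: "\<And>v. ereal \<mu> \<le> prox_obj s f w v"
    and a: "prox_obj s f w a = ereal pa" and b: "prox_obj s f w b = ereal pb"
  shows "(norm (a - b))^2 \<le> 4 * s * (pa + pb - 2 * \<mu>)"
proof -
  define m where "m = (1/2) *\<^sub>R a + (1/2) *\<^sub>R b"
  have "f m \<le> ereal (1/2) * f a + ereal (1/2) * f b"
    using cvx[unfolded convex_ereal_fun_def, rule_format, of "1/2" a b] by (simp add: m_def)
  also have "\<dots> = ereal ((pa - (norm (a - w))^2 / (2 * s)) / 2 + (pb - (norm (b - w))^2 / (2 * s)) / 2)"
    using prox_obj_eq_ereal[OF a ninf] prox_obj_eq_ereal[OF b ninf] by simp
  finally have "ereal \<mu> \<le> ereal ((pa - (norm (a - w))^2 / (2 * s)) / 2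
      + (pb - (norm (b - w))^2 / (2 * s)) / 2 + (norm (m - w))^2 / (2 * s))"
    using lower[of m] unfolding prox_obj_def by (metis add_right_mono order_trans plus_ereal.simps(1))
  also have "(pa - (norm (a - w))^2 / (2 * s)) / 2 + (pb - (norm (b - w))^2 / (2 * s)) / 2
      + (norm (m - w))^2 / (2 * s) = (pa + pb) / 2 - (norm (a - b))^2 / (8 * s)"
    unfolding m_def norm_midpoint_sq using s by (simp add: field_simps)
  finally have "(norm (a - b))^2 / (8 * s) \<le> (pa + pb) / 2 - \<mu>" by simp
  then have "(norm (a - b))^2 \<le> ((pa + pb) / 2 - \<mu>) * (8 * s)" using s by (simp add: pos_divide_le_eq)
  also have "\<dots> = 4 * s * (pa + pb - 2 * \<mu>)" by (simp add: field_simps)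
  finally show ?thesis .
qed

lemma prox_obj_minimizer_finite:
  assumes proper: "proper_fun f" and min: "\<And>v. prox_obj s f w p \<le> prox_obj s f w v"
  shows "f p \<noteq> \<infinity>"
proof -
  obtain v where v: "f v \<noteq> \<infinity>" using proper by (auto simp: proper_fun_def)
  have "f v \<noteq> -\<infinity>" using proper by (simp add: proper_fun_def)
  then have "prox_obj s f w v < \<infinity>" using v by (cases "f v") (auto simp: prox_obj_def)
  then show ?thesis using min[of v] by (auto simp: prox_obj_def)
qed

lemma prox_obj_INF_finite:
  assumes proper: "proper_fun f" and lower: "\<And>v. ereal \<mu>0 \<le> prox_obj s f w v"
  obtains \<mu> where "(INF v. prox_obj s f w v) = ereal \<mu>"
proof -
  obtain v0 where "f v0 \<noteq> \<infinity>" using proper by (auto simp: proper_fun_def)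
  moreover have "f v0 \<noteq> -\<infinity>" using proper by (simp add: proper_fun_def)
  ultimately have "prox_obj s f w v0 < \<infinity>" by (cases "f v0") (auto simp: prox_obj_def)
  moreover have "(INF v. prox_obj s f w v) \<le> prox_obj s f w v0" by (rule INF_lower) simp
  moreover have "ereal \<mu>0 \<le> (INF v. prox_obj s f w v)" by (rule INF_greatest) (rule lower)
  ultimately show ?thesis using that by (cases "INF v. prox_obj s f w v") auto
qed

lemma prox_obj_near_minimizers_Cauchy:
  fixes f :: "'a::real_inner \<Rightarrow> ereal"
  assumes cvx: "convex_ereal_fun f" and s: "0 < s" and ninf: "\<And>u. f u \<noteq> -\<infinity>"
    and lower: "\<And>v. ereal \<mu> \<le> prox_obj s f w v"
    and q: "\<And>n. prox_obj s f w (vs n) = ereal (q n)" "\<And>n. q n < \<mu> + 1 / Suc n"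
  shows "Cauchy vs"
proof (rule Cauchy_if_norm_diff_sq_le)
  show "(\<lambda>n. 4 * s * (1 / Suc n)) \<longlonglongrightarrow> 0"
    using tendsto_mult_right_zero[OF LIMSEQ_Suc[OF lim_const_over_n[of 1]]] by simp
  fix n m :: nat
  have "(norm (vs n - vs m))^2 \<le> 4 * s * (q n + q m - 2 * \<mu>)"
    by (rule prox_obj_midpoint[OF cvx s ninf lower q(1) q(1)])
  also have "\<dots> \<le> 4 * s * (1 / Suc n + 1 / Suc m)"
    using q(2)[of n] q(2)[of m] s by (intro mult_left_mono) auto
  finally show "(norm (vs n - vs m))^2 \<le> 4 * s * (1 / Suc n) + 4 * s * (1 / Suc m)"
    by (simp add: distrib_left)
qed

lemma prox_obj_has_minimizer:
  fixes f :: "'a::{real_inner,complete_space} \<Rightarrow> ereal"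
  assumes proper: "proper_fun f" and lsc: "lsc_fun f" and cvx: "convex_ereal_fun f" and s: "0 < s"
    and lower: "\<And>v. ereal \<mu>0 \<le> prox_obj s f w v"
  shows "\<exists>p. \<forall>v. prox_obj s f w p \<le> prox_obj s f w v"
proof -
  have ninf: "\<And>u. f u \<noteq> -\<infinity>" using proper by (simp add: proper_fun_def)
  obtain \<mu> where \<mu>: "(INF v. prox_obj s f w v) = ereal \<mu>"
    using prox_obj_INF_finite[OF proper lower] by blast
  have \<mu>_le: "ereal \<mu> \<le> prox_obj s f w v" for v
    unfolding \<mu>[symmetric] by (rule INF_lower) simp
  have "\<exists>v. prox_obj s f w v < ereal (\<mu> + 1 / Suc n)" for n
  proof -
    have "(INF v. prox_obj s f w v) < ereal (\<mu> + 1 / Suc n)" using \<mu> by simp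
    then show ?thesis by (simp add: INF_less_iff)
  qed
  then obtain vs where vs: "\<And>n. prox_obj s f w (vs n) < ereal (\<mu> + 1 / Suc n)" by metis
  define q where "q n = real_of_ereal (prox_obj s f w (vs n))" for n
  have q: "prox_obj s f w (vs n) = ereal (q n)" "\<mu> \<le> q n" "q n < \<mu> + 1 / Suc n" for n
    using vs[of n] \<mu>_le[of "vs n"] by (cases "prox_obj s f w (vs n)"; simp add: q_def)+
  obtain p where p: "vs \<longlonglongrightarrow> p"
    using prox_obj_near_minimizers_Cauchy[OF cvx s ninf \<mu>_le q(1) q(3)]
    by (auto simp: Cauchy_convergent_iff convergent_def)
  have "q \<longlonglongrightarrow> \<mu>"
  proof (rule tendsto_sandwich[of "\<lambda>n. \<mu>" _ _ "\<lambda>n. \<mu> + 1 / Suc n"])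
    show "(\<lambda>n. \<mu> + 1 / real (Suc n)) \<longlonglongrightarrow> \<mu>"
      using tendsto_add[OF tendsto_const LIMSEQ_Suc[OF lim_const_over_n[of 1]], of \<mu>] by simp
    show "eventually (\<lambda>n. \<mu> \<le> q n) sequentially" using q(2) by simp
    show "eventually (\<lambda>n. q n \<le> \<mu> + 1 / Suc n) sequentially"
      using q(3) by (intro always_eventually allI less_imp_le)
  qed simp
  have "f p \<le> ereal (\<mu> - (norm (p - w))^2 / (2 * s))"
  proof (rule lsc_fun_seq_le[OF lsc p])
    show "f (vs n) \<le> ereal (q n - (norm (vs n - w))^2 / (2 * s))" for n
      using prox_obj_eq_ereal[OF q(1) ninf] by simp
    show "(\<lambda>n. q n - (norm (vs n - w))^2 / (2 * s)) \<longlonglongrightarrow> \<mu> - (norm (p - w))^2 / (2 * s)"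
      using s by (intro tendsto_intros \<open>q \<longlonglongrightarrow> \<mu>\<close> p) auto
  qed
  then have "prox_obj s f w p \<le> ereal \<mu>"
    unfolding prox_obj_def by (metis add_right_mono diff_add_cancel plus_ereal.simps(1))
  then show ?thesis using \<mu>_le order_trans by blast
qed

lemma prox_obj_minimizer_unique:
  fixes f :: "'a::real_inner \<Rightarrow> ereal"
  assumes proper: "proper_fun f" and cvx: "convex_ereal_fun f" and s: "0 < s"
    and p: "\<And>v. prox_obj s f w p \<le> prox_obj s f w v"
    and q: "\<And>v. prox_obj s f w q \<le> prox_obj s f w v"
  shows "q = p"
proof -
  have ninf: "\<And>u. f u \<noteq> -\<infinity>" using proper by (simp add: proper_fun_def)
  have "f p \<noteq> \<infinity>" by (rule prox_obj_minimizer_finite[OF proper p])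
  then obtain \<mu> where \<mu>: "prox_obj s f w p = ereal \<mu>"
    using ninf[of p] by (cases "f p") (auto simp: prox_obj_def)
  moreover have "prox_obj s f w q = ereal \<mu>" using p[of q] q[of p] \<mu> by simp
  ultimately have "(norm (q - p))^2 \<le> 4 * s * (\<mu> + \<mu> - 2 * \<mu>)"
    using p by (intro prox_obj_midpoint[OF cvx s ninf]) (auto simp: \<mu>[symmetric])
  then show ?thesis by simp
qed

lemma prox_minimizes:
  fixes f :: "'a::{real_inner,complete_space} \<Rightarrow> ereal"
  assumes proper: "proper_fun f" and lsc: "lsc_fun f" and cvx: "convex_ereal_fun f" and s: "0 < s"
    and lower: "\<And>v. ereal \<mu>0 \<le> prox_obj s f w v"
  shows "prox_obj s f w (prox s f w) \<le> prox_obj s f w v"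
proof -
  obtain p where p: "\<And>v. prox_obj s f w p \<le> prox_obj s f w v"
    using prox_obj_has_minimizer[OF proper lsc cvx s lower] by blast
  have "prox s f w = p"
    unfolding prox_eq_THE_prox_obj
    by (rule the_equality) (use p prox_obj_minimizer_unique[OF proper cvx s p] in auto)
  then show ?thesis using p by simp
qed

lemma prox_obj_minimizer_variational_inequality:
  fixes f :: "'a::real_inner \<Rightarrow> ereal"
  assumes cvx: "convex_ereal_fun f" and s: "0 < s"
    and fp: "f p = ereal fp" and fu: "f u = ereal fu"
    and min: "\<And>v. prox_obj s f w p \<le> prox_obj s f w v"
  shows "fp \<le> fu + (1 / s) * ((p - w) \<bullet> (u - p))"
proof (rule le_of_le_add_small_multiple)
  fix t :: real assume t: "0 < t" "t \<le> 1"
  define v where "v = (1 - t) *\<^sub>R p + t *\<^sub>R u"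
  have "f v \<le> ereal (1 - t) * f p + ereal t * f u"
    using cvx t unfolding convex_ereal_fun_def v_def by auto
  then have "prox_obj s f w v \<le> ereal ((1 - t) * fp + t * fu + (norm (v - w))^2 / (2 * s))"
    unfolding prox_obj_def fp fu by (metis add_right_mono plus_ereal.simps(1) times_ereal.simps(1))
  moreover have "prox_obj s f w p = ereal (fp + (norm (p - w))^2 / (2 * s))"
    by (simp add: prox_obj_def fp)
  ultimately have "ereal (fp + (norm (p - w))^2 / (2 * s))
      \<le> ereal ((1 - t) * fp + t * fu + (norm (v - w))^2 / (2 * s))"
    using min[of v] by (metis order_trans)
  then have I: "fp + (norm (p - w))^2 / (2 * s) \<le> (1 - t) * fp + t * fu + (norm (v - w))^2 / (2 * s)"
    by simp
  have "(norm (v - w))^2 = (norm (p - w))^2 + 2 * t * ((p - w) \<bullet> (u - p)) + t^2 * (norm (u - p))^2"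
  proof -
    have vw: "v - w = (p - w) + t *\<^sub>R (u - p)" by (simp add: v_def algebra_simps)
    show ?thesis unfolding vw power2_norm_add by (simp add: power_mult_distrib)
  qed
  with I s have "t * fp \<le> t * (fu + (1 / s) * ((p - w) \<bullet> (u - p)) + t * ((norm (u - p))^2 / (2 * s)))"
    by (simp add: field_simps power2_eq_square)
  then show "fp \<le> fu + (1 / s) * ((p - w) \<bullet> (u - p)) + t * ((norm (u - p))^2 / (2 * s))"
    using t by simp
qed

lemma forward_backward_inequality:
  fixes \<Phi> :: "'a::real_inner \<Rightarrow> real"
  assumes cvx: "convex_on UNIV \<Phi>" and grad: "\<And>u. (\<Phi> has_derivative (\<lambda>h. G u \<bullet> h)) (at u)"
    and Lip: "\<And>u v. norm (G u - G v) \<le> L * norm (u - v)"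
    and s: "0 < s" "s * L \<le> 1"
    and prox_ineq: "\<psi>p \<le> \<psi>u + (1 / s) * ((p - (y - s *\<^sub>R (G y - e))) \<bullet> (u - p))"
  shows "\<psi>p + \<Phi> p \<le> \<psi>u + \<Phi> u + (1 / s) * ((p - y) \<bullet> (u - y))
    - (1 / (2 * s)) * (norm (p - y))^2 + e \<bullet> (p - u)"
proof -
  define d where "d = p - y"
  have descent: "\<Phi> p \<le> \<Phi> y + G y \<bullet> d + L / 2 * (norm d)^2"
    unfolding d_def by (rule descent_lemma[OF grad Lip])
  have tangent: "\<Phi> y + G y \<bullet> (u - y) \<le> \<Phi> u" by (rule convex_on_gradient_inequality[OF cvx grad])
  have "(1 / s) * ((p - (y - s *\<^sub>R (G y - e))) \<bullet> (u - p))
      = (1 / s) * (d \<bullet> (u - y)) - (1 / s) * (norm d)^2 + G y \<bullet> (u - p) - e \<bullet> (u - p)"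
  proof -
    have "p - (y - s *\<^sub>R (G y - e)) = d + s *\<^sub>R G y - s *\<^sub>R e" by (simp add: d_def algebra_simps)
    moreover have "u - p = (u - y) - d" by (simp add: d_def)
    ultimately show ?thesis using s by (simp add: inner_simps power2_norm_eq_inner field_simps)
  qed
  moreover have "G y \<bullet> (u - p) - G y \<bullet> (u - y) + G y \<bullet> d = 0" by (simp add: d_def inner_simps)
  ultimately have "\<psi>p + \<Phi> p \<le> \<psi>u + \<Phi> u + (1 / s) * (d \<bullet> (u - y)) - (1 / s) * (norm d)^2
      + L / 2 * (norm d)^2 + e \<bullet> (p - u)"
    using prox_ineq descent tangent by (simp add: inner_diff_right)
  moreover have "L / 2 * (norm d)^2 \<le> (1 / (2 * s)) * (norm d)^2"
    using s by (intro mult_right_mono) (auto simp: field_simps mult.commute)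
  ultimately show ?thesis by (simp add: d_def field_simps)
qed

section \<open>One step of the accelerated scheme\<close>

lemma three_point_identity:
  fixes u v z :: "'a::real_inner"
  shows "2 * ((u - v) \<bullet> (z - v)) - (norm (u - v))^2 = (norm (v - z))^2 - (norm (u - z))^2"
proof -
  have "u - z = (u - v) + (v - z)" by simp
  then have "(norm (u - z))^2 = (norm (u - v))^2 + 2 * ((u - v) \<bullet> (v - z)) + (norm (v - z))^2"
    by (metis power2_norm_add)
  moreover have "(u - v) \<bullet> (z - v) = - ((u - v) \<bullet> (v - z))"
    by (metis inner_minus_right minus_diff_eq)
  ultimately show ?thesis by simp
qed

text \<open>The algebraic core of the Lyapunov estimate: \<open>(T - 1)\<close> times the comparison with the
  previous iterate plus the comparison with a minimizer \<open>z\<close>, both scaled by \<open>T\<close>.\<close>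
lemma accelerated_energy_step:
  fixes a b c z e y :: "'a::real_inner" and T T\<^sub>0 s Wa Wb :: real
  assumes T: "T \<ge> 1" and s: "0 < s"
    and y: "y = b + ((T\<^sub>0 - 1) / T) *\<^sub>R (b - c)"
    and prev: "Wa \<le> Wb + (1 / s) * ((a - y) \<bullet> (b - y)) - (1 / (2 * s)) * (norm (a - y))^2 + e \<bullet> (a - b)"
    and min: "Wa \<le> (1 / s) * ((a - y) \<bullet> (z - y)) - (1 / (2 * s)) * (norm (a - y))^2 + e \<bullet> (a - z)"
  shows "T^2 * Wa + (1 / (2 * s)) * (norm (b + T *\<^sub>R (a - b) - z))^2
     \<le> (T^2 - T) * Wb + (1 / (2 * s)) * (norm (c + T\<^sub>0 *\<^sub>R (b - c) - z))^2
       + T * (e \<bullet> (b + T *\<^sub>R (a - b) - z))"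
proof -
  define ua where "ua = b + T *\<^sub>R (a - b)"
  define ub where "ub = c + T\<^sub>0 *\<^sub>R (b - c)"
  have Ty: "T *\<^sub>R y = T *\<^sub>R b + (T\<^sub>0 - 1) *\<^sub>R (b - c)" using T by (simp add: y scaleR_add_right)
  have a_y: "T *\<^sub>R (a - y) = ua - ub" using Ty by (simp add: ua_def ub_def algebra_simps)
  have b_y: "(T - 1) *\<^sub>R (b - y) + (z - y) = z - ub" using Ty by (simp add: ub_def algebra_simps)
  have a_b: "(T - 1) *\<^sub>R (a - b) + (a - z) = ua - z" by (simp add: ua_def algebra_simps)
  have "T * (T - 1) * Wa + T * Wa \<le> T * (T - 1) * (Wb + (1 / s) * ((a - y) \<bullet> (b - y))
      - (1 / (2 * s)) * (norm (a - y))^2 + e \<bullet> (a - b))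
      + T * ((1 / s) * ((a - y) \<bullet> (z - y)) - (1 / (2 * s)) * (norm (a - y))^2 + e \<bullet> (a - z))"
    using T by (intro add_mono mult_left_mono prev min) auto
  also have "\<dots> = T * (T - 1) * Wb + (1 / (2 * s)) * (2 * ((T *\<^sub>R (a - y)) \<bullet> ((T - 1) *\<^sub>R (b - y) + (z - y)))
      - (norm (T *\<^sub>R (a - y)))^2) + T * (e \<bullet> ((T - 1) *\<^sub>R (a - b) + (a - z)))"
    unfolding norm_scaleR power_mult_distrib inner_scaleR_left
    by (simp add: inner_add_right power2_eq_square algebra_simps add_divide_distrib diff_divide_distrib)
  also have "\<dots> = T * (T - 1) * Wb + (1 / (2 * s)) * ((norm (ub - z))^2 - (norm (ua - z))^2)
      + T * (e \<bullet> (ua - z))"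
    unfolding a_y b_y a_b three_point_identity ..
  finally show ?thesis
    unfolding ua_def[symmetric] ub_def[symmetric] by (simp add: power2_eq_square algebra_simps)
qed

lemma accelerated_increment_step:
  fixes a b c e y :: "'a::real_inner" and \<theta> s Wa Wb :: real
  assumes s: "0 < s" and y: "y = b + \<theta> *\<^sub>R (b - c)"
    and prev: "Wa \<le> Wb + (1 / s) * ((a - y) \<bullet> (b - y)) - (1 / (2 * s)) * (norm (a - y))^2 + e \<bullet> (a - b)"
  shows "Wa + (norm (a - b))^2 / (2 * s) \<le> Wb + \<theta>^2 * ((norm (b - c))^2 / (2 * s)) + e \<bullet> (a - b)"
proof -
  have "(norm (a - b))^2 = (norm (a - y))^2 - 2 * ((a - y) \<bullet> (b - y)) + (norm (b - y))^2"
    using power2_norm_add[of "a - y" "y - b"]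
    by (simp add: inner_diff_right norm_minus_commute[of y b])
  moreover have "(norm (b - y))^2 = \<theta>^2 * (norm (b - c))^2" by (simp add: y power_mult_distrib)
  ultimately have "(1 / s) * ((a - y) \<bullet> (b - y)) - (1 / (2 * s)) * (norm (a - y))^2
     = \<theta>^2 * ((norm (b - c))^2 / (2 * s)) - (norm (a - b))^2 / (2 * s)"
    using s by (simp add: field_simps)
  then show ?thesis using prev by linarith
qed

section \<open>Opial's lemma\<close>

lemma exists_norm_sq_less_infdist_sq:
  fixes H :: "'a::real_normed_vector set"
  assumes "H \<noteq> {}" "0 < e"
  shows "\<exists>p\<in>H. (norm p)^2 < (infdist 0 H)^2 + e"
proof -
  have "infdist 0 H < sqrt ((infdist 0 H)^2 + e)"
    using assms(2) infdist_nonneg[of 0 H] by (intro real_less_rsqrt) auto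
  moreover have "bdd_below ((\<lambda>a. dist 0 a) ` H)" by (rule bdd_belowI[of _ 0]) auto
  ultimately obtain p where p: "p \<in> H" "dist 0 p < sqrt ((infdist 0 H)^2 + e)"
    using cINF_less_iff[OF assms(1)] by (metis infdist_notempty[OF assms(1)])
  then have "norm p < sqrt ((infdist 0 H)^2 + e)" by simp
  then have "(norm p)^2 < (sqrt ((infdist 0 H)^2 + e))^2" by (intro power_strict_mono) auto
  then show ?thesis using p(1) assms(2) by auto
qed

text \<open>The near-minimal-norm points of the sets form a Cauchy sequence.\<close>
lemma decreasing_closed_convex_Inter_nonempty:
  fixes H :: "nat \<Rightarrow> 'a::{real_inner,complete_space} set"
  assumes ne: "\<And>n. H n \<noteq> {}" and closed: "\<And>n. closed (H n)" and convex: "\<And>n. convex (H n)"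
    and decr: "\<And>n m. n \<le> m \<Longrightarrow> H m \<subseteq> H n" and bounded: "bounded (H 0)"
  shows "\<exists>w. \<forall>n. w \<in> H n"
proof -
  define d where "d n = (infdist 0 (H n))^2" for n
  obtain M where M: "\<And>u. u \<in> H 0 \<Longrightarrow> norm u \<le> M" using bounded by (auto simp: bounded_iff)
  have d_le_norm: "d n \<le> (norm u)^2" if "u \<in> H n" for n u
    unfolding d_def using that infdist_le[OF that, of 0] infdist_nonneg[of 0 "H n"]
    by (auto intro: power_mono)
  have "incseq d"
    unfolding incseq_def d_def using decr ne infdist_nonneg by (metis infdist_mono power_mono)
  moreover have "d n \<le> M^2" for n
  proof -
    obtain u where u: "u \<in> H n" using ne[of n] by blast
    then have "norm u \<le> M" using decr[of 0 n] M by blast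
    then show ?thesis using d_le_norm[OF u] by (meson norm_ge_zero order_trans power_mono)
  qed
  ultimately obtain l where l: "d \<longlonglongrightarrow> l" using incseq_convergent by metis
  have d_le_l: "d n \<le> l" for n using \<open>incseq d\<close> l by (rule incseq_le)
  have "\<forall>n. \<exists>p\<in>H n. (norm p)^2 < d n + 1 / Suc n"
    unfolding d_def using ne by (intro allI exists_norm_sq_less_infdist_sq) auto
  then obtain p where p: "\<And>n. p n \<in> H n" "\<And>n. (norm (p n))^2 < d n + 1 / Suc n" by metis
  have "Cauchy p"
  proof (rule Cauchy_if_norm_diff_sq_le[where a = "\<lambda>n. 2 * (l - d n) + 2 / Suc n"])
    have "(\<lambda>n. 2 * (l - d n) + 2 / Suc n) \<longlonglongrightarrow> 2 * (l - l) + 0"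
      by (intro tendsto_add tendsto_mult tendsto_diff tendsto_const l LIMSEQ_Suc[OF lim_const_over_n])
    then show "(\<lambda>n. 2 * (l - d n) + 2 / Suc n) \<longlonglongrightarrow> 0" by simp
    fix n m :: nat assume nm: "n \<le> m"
    have "(1/2) *\<^sub>R p n + (1/2) *\<^sub>R p m \<in> H n"
      using p(1)[of m] decr[OF nm] p(1)[of n] by (intro convexD[OF convex]) auto
    then have "d n \<le> (norm ((1/2) *\<^sub>R p n + (1/2) *\<^sub>R p m - 0))^2" by (simp add: d_le_norm)
    then show "(norm (p n - p m))^2 \<le> (2 * (l - d n) + 2 / Suc n) + (2 * (l - d m) + 2 / Suc m)"
      unfolding norm_midpoint_sq using p(2)[of n] p(2)[of m] d_le_l[of m] by simp
  qed
  then obtain w where w: "p \<longlonglongrightarrow> w" using Cauchy_convergent_iff convergent_def by blast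
  have "w \<in> H n" for n
  proof (rule Lim_in_closed_set[OF closed _ _ w])
    show "eventually (\<lambda>m. p m \<in> H n) sequentially"
      unfolding eventually_sequentially using p(1) decr by blast
  qed simp
  then show ?thesis by blast
qed

definition tail_hull :: "(nat \<Rightarrow> 'a::real_normed_vector) \<Rightarrow> nat set \<Rightarrow> nat \<Rightarrow> 'a set" where
  "tail_hull x A n = closure (convex hull (x ` {k\<in>A. n \<le> k}))"

lemma tail_hull_antimono: "n \<le> m \<Longrightarrow> tail_hull x A m \<subseteq> tail_hull x A n"
  unfolding tail_hull_def by (intro closure_mono hull_mono image_mono) auto

lemma tail_hull_subset:
  assumes "\<And>k. k \<in> A \<Longrightarrow> n \<le> k \<Longrightarrow> x k \<in> C" and "closed C" and "convex C"
  shows "tail_hull x A n \<subseteq> C"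
  unfolding tail_hull_def using assms by (intro closure_minimal hull_minimal) auto

lemma tail_hull_Inter_nonempty:
  fixes x :: "nat \<Rightarrow> 'a::{real_inner,complete_space}"
  assumes "infinite A" and "bounded (range x)"
  shows "\<exists>w. \<forall>n. w \<in> tail_hull x A n"
proof (rule decreasing_closed_convex_Inter_nonempty)
  fix n
  obtain k where "k \<in> A" "n \<le> k" using \<open>infinite A\<close> infinite_nat_iff_unbounded_le by blast
  then have "x k \<in> tail_hull x A n"
    unfolding tail_hull_def by (intro subsetD[OF closure_subset] hull_inc) auto
  then show "tail_hull x A n \<noteq> {}" by blast
  show "closed (tail_hull x A n)" "convex (tail_hull x A n)"
    unfolding tail_hull_def by (auto intro: convex_closure)
next
  show "bounded (tail_hull x A 0)"
    unfolding tail_hull_def using \<open>bounded (range x)\<close>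
    by (intro bounded_closure bounded_convex_hull bounded_subset[OF \<open>bounded (range x)\<close>]) auto
qed (rule tail_hull_antimono)

lemma tail_hull_inner_eq_limit:
  fixes x :: "nat \<Rightarrow> 'a::real_inner"
  assumes lim: "(\<lambda>k. v \<bullet> x k) \<longlonglongrightarrow> l" and w: "\<forall>n. w \<in> tail_hull x A n"
  shows "v \<bullet> w = l"
proof -
  have slab: "l - e \<le> v \<bullet> w \<and> v \<bullet> w \<le> l + e" if "e > 0" for e
  proof -
    obtain N where N: "\<And>k. k \<ge> N \<Longrightarrow> \<bar>v \<bullet> x k - l\<bar> < e"
      using lim \<open>e > 0\<close> unfolding LIMSEQ_def dist_real_def by blast
    have "tail_hull x A N \<subseteq> {u. l - e \<le> v \<bullet> u} \<inter> {u. v \<bullet> u \<le> l + e}"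
    proof (rule tail_hull_subset)
      show "closed ({u. l - e \<le> v \<bullet> u} \<inter> {u. v \<bullet> u \<le> l + e})"
        by (intro closed_Int closed_halfspace_le closed_halfspace_ge)
      show "convex ({u. l - e \<le> v \<bullet> u} \<inter> {u. v \<bullet> u \<le> l + e})"
        by (intro convex_Int convex_halfspace_le convex_halfspace_ge)
    qed (use N in fastforce)
    then show ?thesis using w by blast
  qed
  show ?thesis by (rule antisym; rule field_le_epsilon) (use slab in force)+
qed

lemma convergent_inner_diff_if_convergent_dist:
  fixes x :: "nat \<Rightarrow> 'a::real_inner"
  assumes "convergent (\<lambda>k. (norm (x k - z1))^2)" and "convergent (\<lambda>k. (norm (x k - z2))^2)"
  shows "convergent (\<lambda>k. (z1 - z2) \<bullet> x k)"
proof -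
  have eq: "(z1 - z2) \<bullet> x k
      = ((norm (x k - z2))^2 - (norm (x k - z1))^2 + (norm z1)^2 - (norm z2)^2) / 2" for k
    by (simp add: power2_norm_eq_inner inner_simps inner_commute field_simps)
  from assms obtain l1 l2 where
    "(\<lambda>k. (norm (x k - z1))^2) \<longlonglongrightarrow> l1" "(\<lambda>k. (norm (x k - z2))^2) \<longlonglongrightarrow> l2"
    unfolding convergent_def by blast
  then have "(\<lambda>k. ((norm (x k - z2))^2 - (norm (x k - z1))^2 + (norm z1)^2 - (norm z2)^2) / 2)
      \<longlonglongrightarrow> (l2 - l1 + (norm z1)^2 - (norm z2)^2) / 2"
    by (intro tendsto_intros) auto
  then show ?thesis unfolding eq convergent_def by blast
qed

lemma tail_hull_common_point_unique:
  fixes x :: "nat \<Rightarrow> 'a::real_inner"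
  assumes dist_conv: "\<And>z. z \<in> S \<Longrightarrow> convergent (\<lambda>k. (norm (x k - z))^2)"
    and w1: "w1 \<in> S" "\<forall>n. w1 \<in> tail_hull x A1 n" and w2: "w2 \<in> S" "\<forall>n. w2 \<in> tail_hull x A2 n"
  shows "w1 = w2"
proof -
  obtain l where "(\<lambda>k. (w1 - w2) \<bullet> x k) \<longlonglongrightarrow> l"
    using convergent_inner_diff_if_convergent_dist[OF dist_conv dist_conv, OF w1(1) w2(1)]
    unfolding convergent_def by blast
  then have "(w1 - w2) \<bullet> w1 = l" "(w1 - w2) \<bullet> w2 = l"
    using tail_hull_inner_eq_limit w1(2) w2(2) by blast+
  then have "(w1 - w2) \<bullet> (w1 - w2) = 0" by (simp add: inner_diff_right)
  then show ?thesis by simp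
qed

text \<open>Opial's lemma, with common points of the closed convex hulls of tails of subsequences
  standing in for weak cluster points.\<close>
lemma opial_weak_convergence:
  fixes x :: "nat \<Rightarrow> 'a::{real_inner,complete_space}"
  assumes bounded: "bounded (range x)"
    and dist_conv: "\<And>z. z \<in> S \<Longrightarrow> convergent (\<lambda>k. (norm (x k - z))^2)"
    and clusters: "\<And>w A. \<forall>n. w \<in> tail_hull x A n \<Longrightarrow> w \<in> S"
  shows "\<exists>z\<in>S. weakly_converges x z"
proof -
  obtain z where z: "\<forall>n. z \<in> tail_hull x UNIV n"
    using tail_hull_Inter_nonempty[OF infinite_UNIV_nat bounded] by blast
  have zS: "z \<in> S" using clusters[OF z] .
  have "(\<lambda>k. x k \<bullet> y) \<longlonglongrightarrow> z \<bullet> y" for y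
  proof (rule ccontr)
    assume "\<not> (\<lambda>k. x k \<bullet> y) \<longlonglongrightarrow> z \<bullet> y"
    then obtain e where e: "e > 0"
      and freq: "frequently (\<lambda>k. e \<le> \<bar>x k \<bullet> y - z \<bullet> y\<bar>) sequentially"
      unfolding tendsto_iff dist_real_def by (auto simp: not_eventually not_less)
    from freq have "frequently (\<lambda>k. e \<le> 1 * (x k \<bullet> y - z \<bullet> y) \<or> e \<le> -1 * (x k \<bullet> y - z \<bullet> y))
        sequentially"
      by (rule frequently_elim1) (auto simp: abs_real_def split: if_splits)
    then obtain \<sigma> :: real where "frequently (\<lambda>k. e \<le> \<sigma> * (x k \<bullet> y - z \<bullet> y)) sequentially"
      unfolding frequently_disj_iff by blast
    then have A: "infinite {k. e \<le> \<sigma> * (x k \<bullet> y - z \<bullet> y)}" (is "infinite ?A")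
      by (simp add: cofinite_eq_sequentially[symmetric] frequently_cofinite)
    then obtain w where w: "\<forall>n. w \<in> tail_hull x ?A n"
      using tail_hull_Inter_nonempty[OF _ bounded] by blast
    have "w = z" by (rule tail_hull_common_point_unique[OF dist_conv clusters[OF w] w zS z])
    moreover have "tail_hull x ?A 0 \<subseteq> {u. \<sigma> * (z \<bullet> y) + e \<le> (\<sigma> *\<^sub>R y) \<bullet> u}"
    proof (rule tail_hull_subset)
      show "closed {u. \<sigma> * (z \<bullet> y) + e \<le> (\<sigma> *\<^sub>R y) \<bullet> u}" by (rule closed_halfspace_ge)
      show "convex {u. \<sigma> * (z \<bullet> y) + e \<le> (\<sigma> *\<^sub>R y) \<bullet> u}" by (rule convex_halfspace_ge)
    qed (simp add: inner_commute[of y] algebra_simps)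
    ultimately show False using w e by (auto simp: inner_commute[of y])
  qed
  then show ?thesis using zS unfolding weakly_converges_def by blast
qed

section \<open>The inexact accelerated forward-backward scheme\<close>

locale inexact_accelerated_forward_backward =
  fixes \<Psi> :: "'a::{real_inner, complete_space} \<Rightarrow> ereal"
    and \<Phi> :: "'a \<Rightarrow> real" and gradPhi :: "'a \<Rightarrow> 'a"
    and L s \<alpha> :: real
    and x g :: "nat \<Rightarrow> 'a"
  assumes proper: "proper_fun \<Psi>" and lsc: "lsc_fun \<Psi>" and cvxPsi: "convex_ereal_fun \<Psi>"
    and cvxPhi: "convex_on UNIV \<Phi>"
    and grad: "\<And>u. (\<Phi> has_derivative (\<lambda>h. gradPhi u \<bullet> h)) (at u)"
    and L_pos: "L > 0"
    and Lip: "\<And>u v. norm (gradPhi u - gradPhi v) \<le> L * norm (u - v)"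
    and S_nonempty: "\<exists>z. \<forall>u. \<Psi> z + ereal (\<Phi> z) \<le> \<Psi> u + ereal (\<Phi> u)"
    and alpha: "\<alpha> > 3"
    and s: "0 < s" "s < 1 / L"
    and scheme: "\<And>k. k \<ge> 1 \<Longrightarrow>
        (let y = x k + ((real k - 1) / (real k + \<alpha> - 1)) *\<^sub>R (x k - x (k - 1))
         in x (k + 1) = prox s \<Psi> (y - s *\<^sub>R (gradPhi y - g k)))"
    and err: "summable (\<lambda>k. real k * norm (g k))"
begin

definition "\<theta> k = (real k - 1) / (real k + \<alpha> - 1)"
definition "y k = x k + \<theta> k *\<^sub>R (x k - x (k - 1))"
text \<open>\<open>\<psi>\<close> is meaningful only where \<open>\<Psi>\<close> is finite; this holds at every \<open>x k\<close> with \<open>k \<ge> 2\<close>, but not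
  necessarily at the arbitrary starting points \<open>x 0\<close> and \<open>x 1\<close>, whence the bounds \<open>k \<ge> 2\<close> below.\<close>
definition "\<psi> u = real_of_ereal (\<Psi> u)"
definition "F u = \<psi> u + \<Phi> u"
definition "S = {z. \<forall>u. \<Psi> z + ereal (\<Phi> z) \<le> \<Psi> u + ereal (\<Phi> u)}"
definition "Fmin = F (SOME z. z \<in> S)"
definition "gap k = F (x k) - Fmin"

lemma Psi_neq_minf: "\<Psi> u \<noteq> -\<infinity>"
  using proper by (simp add: proper_fun_def)

lemma Psi_eq_psi: "\<Psi> u \<noteq> \<infinity> \<Longrightarrow> \<Psi> u = ereal (\<psi> u)"
  using Psi_neq_minf[of u] by (cases "\<Psi> u") (auto simp: \<psi>_def)

lemma some_in_S: "(SOME z. z \<in> S) \<in> S"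
proof -
  have "\<exists>z. z \<in> S" using S_nonempty by (simp add: S_def)
  then show ?thesis by (rule someI_ex)
qed

lemma Psi_finite_on_S: "z \<in> S \<Longrightarrow> \<Psi> z = ereal (\<psi> z)"
proof -
  assume z: "z \<in> S"
  obtain v where "\<Psi> v \<noteq> \<infinity>" using proper by (auto simp: proper_fun_def)
  then have "\<Psi> v + ereal (\<Phi> v) < \<infinity>" using Psi_neq_minf[of v] by (cases "\<Psi> v") auto
  moreover have "\<Psi> z + ereal (\<Phi> z) \<le> \<Psi> v + ereal (\<Phi> v)" using z by (auto simp: S_def)
  ultimately show ?thesis by (intro Psi_eq_psi) auto
qed

lemma Fmin_le: "ereal Fmin \<le> \<Psi> u + ereal (\<Phi> u)"
proof -
  have "\<Psi> (SOME z. z \<in> S) + ereal (\<Phi> (SOME z. z \<in> S)) \<le> \<Psi> u + ereal (\<Phi> u)"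
    using some_in_S by (simp add: S_def)
  then show ?thesis using Psi_finite_on_S[OF some_in_S] by (simp add: Fmin_def F_def)
qed

lemma F_eq_Fmin: "z \<in> S \<Longrightarrow> F z = Fmin"
proof -
  assume z: "z \<in> S"
  then have "\<Psi> z + ereal (\<Phi> z) \<le> \<Psi> (SOME z. z \<in> S) + ereal (\<Phi> (SOME z. z \<in> S))"
    by (simp add: S_def)
  then have "\<Psi> z + ereal (\<Phi> z) \<le> ereal Fmin"
    using Psi_finite_on_S[OF some_in_S] by (simp add: Fmin_def F_def)
  then show ?thesis using Fmin_le[of z] Psi_finite_on_S[OF z] by (simp add: F_def)
qed

lemma INF_eq_Fmin: "(INF u. \<Psi> u + ereal (\<Phi> u)) = ereal Fmin"
proof (rule antisym)
  have "(INF u. \<Psi> u + ereal (\<Phi> u)) \<le> \<Psi> (SOME z. z \<in> S) + ereal (\<Phi> (SOME z. z \<in> S))"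
    by (rule INF_lower) simp
  then show "(INF u. \<Psi> u + ereal (\<Phi> u)) \<le> ereal Fmin"
    using Psi_finite_on_S[OF some_in_S] by (simp add: Fmin_def F_def)
qed (rule INF_greatest, rule Fmin_le)

lemma prox_obj_lower_bound: "\<exists>\<mu>. \<forall>v. ereal \<mu> \<le> prox_obj s \<Psi> w v"
proof (rule prox_obj_bounded_below[OF s(1)])
  fix v
  show "ereal (Fmin - \<Phi> 0 - norm (gradPhi 0) * norm v - L / 2 * (norm v)^2) \<le> \<Psi> v"
  proof (cases "\<Psi> v = \<infinity>")
    case False
    have "\<Phi> v \<le> \<Phi> 0 + gradPhi 0 \<bullet> v + L / 2 * (norm v)^2"
      using descent_lemma[OF grad Lip, of v 0] by simp
    moreover have "gradPhi 0 \<bullet> v \<le> norm (gradPhi 0) * norm v" by (rule norm_cauchy_schwarz)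
    moreover have "Fmin \<le> \<psi> v + \<Phi> v" using Fmin_le[of v] Psi_eq_psi[OF False] by simp
    ultimately show ?thesis by (simp add: Psi_eq_psi[OF False])
  qed simp
  show "L / 2 < 1 / (2 * s)" using s L_pos by (simp add: field_simps)
qed

lemma x_Suc_minimizes:
  assumes "k \<ge> 1"
  shows "prox_obj s \<Psi> (y k - s *\<^sub>R (gradPhi (y k) - g k)) (x (k + 1))
    \<le> prox_obj s \<Psi> (y k - s *\<^sub>R (gradPhi (y k) - g k)) v"
proof -
  have x: "x (k + 1) = prox s \<Psi> (y k - s *\<^sub>R (gradPhi (y k) - g k))"
    using scheme[OF assms] by (simp add: Let_def y_def \<theta>_def)
  obtain \<mu> where "\<And>v. ereal \<mu> \<le> prox_obj s \<Psi> (y k - s *\<^sub>R (gradPhi (y k) - g k)) v"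
    using prox_obj_lower_bound by blast
  then show ?thesis unfolding x by (rule prox_minimizes[OF proper lsc cvxPsi s(1)])
qed

lemma x_finite: "k \<ge> 2 \<Longrightarrow> \<Psi> (x k) = ereal (\<psi> (x k))"
  using prox_obj_minimizer_finite[OF proper x_Suc_minimizes, of "k - 1"] Psi_eq_psi by simp

lemma gap_nonneg: "k \<ge> 2 \<Longrightarrow> 0 \<le> gap k"
  using Fmin_le[of "x k"] x_finite[of k] by (simp add: gap_def F_def)

lemma F_x_Suc_le:
  assumes k: "k \<ge> 1" and u: "\<Psi> u = ereal (\<psi> u)"
  shows "F (x (k + 1)) \<le> F u + (1 / s) * ((x (k + 1) - y k) \<bullet> (u - y k))
     - (1 / (2 * s)) * (norm (x (k + 1) - y k))^2 + g k \<bullet> (x (k + 1) - u)"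
proof -
  have "\<psi> (x (k + 1)) \<le> \<psi> u + (1 / s) * ((x (k + 1) - (y k - s *\<^sub>R (gradPhi (y k) - g k))) \<bullet> (u - x (k + 1)))"
    using x_finite[of "k + 1"] k
    by (intro prox_obj_minimizer_variational_inequality[OF cvxPsi s(1) _ u x_Suc_minimizes]) auto
  moreover have "s * L \<le> 1" using s L_pos by (simp add: field_simps)
  ultimately show ?thesis
    unfolding F_def by (rule forward_backward_inequality[OF cvxPhi grad Lip s(1), rotated])
qed

lemma gap_Suc_le_prev:
  assumes "k \<ge> 2"
  shows "gap (k + 1) \<le> gap k + (1 / s) * ((x (k + 1) - y k) \<bullet> (x k - y k))
     - (1 / (2 * s)) * (norm (x (k + 1) - y k))^2 + g k \<bullet> (x (k + 1) - x k)"
  using F_x_Suc_le[of k "x k"] x_finite[OF assms] assms by (simp add: gap_def)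

lemma gap_Suc_le_min:
  assumes "k \<ge> 1" "z \<in> S"
  shows "gap (k + 1) \<le> (1 / s) * ((x (k + 1) - y k) \<bullet> (z - y k))
     - (1 / (2 * s)) * (norm (x (k + 1) - y k))^2 + g k \<bullet> (x (k + 1) - z)"
  using F_x_Suc_le[OF assms(1) Psi_finite_on_S[OF assms(2)]] F_eq_Fmin[OF assms(2)] by (simp add: gap_def)

definition "\<tau> k = (real k + \<alpha> - 2) / (\<alpha> - 1)"
definition "U k = x (k - 1) + \<tau> k *\<^sub>R (x k - x (k - 1))"
definition "energy z k = (\<tau> k)^2 * gap k + (norm (U k - z))^2 / (2 * s)"
definition "\<rho> k = (\<tau> k)^2 - ((\<tau> (Suc k))^2 - \<tau> (Suc k))"
definition "\<delta> k = norm (x k - x (k - 1))"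

lemma \<tau>_Suc: "\<tau> (Suc k) = \<tau> k + 1 / (\<alpha> - 1)"
  using alpha by (simp add: \<tau>_def field_simps)

lemma \<tau>_ge_1: "k \<ge> 1 \<Longrightarrow> \<tau> k \<ge> 1"
  using alpha by (simp add: \<tau>_def field_simps)

lemma \<tau>_nonneg: "0 \<le> \<tau> k"
  using alpha by (simp add: \<tau>_def)

lemma \<tau>_le: "k \<ge> 1 \<Longrightarrow> \<tau> k \<le> \<alpha> / (\<alpha> - 1) * real k"
  using alpha mult_left_mono[of 1 "real k" "\<alpha> - 1"]
  by (simp add: \<tau>_def divide_right_mono algebra_simps)

lemma \<theta>_eq: "\<theta> k = (\<tau> k - 1) / \<tau> (Suc k)"
proof -
  have "\<tau> k - 1 = (real k - 1) / (\<alpha> - 1)" "\<tau> (Suc k) = (real k + \<alpha> - 1) / (\<alpha> - 1)"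
    using alpha by (simp_all add: \<tau>_def field_simps)
  then show ?thesis using alpha by (simp add: \<theta>_def)
qed

lemma \<rho>_lower: "(\<alpha> - 3) / (\<alpha> - 1)^2 * real k \<le> \<rho> k"
proof -
  have "\<rho> k = (1 - 2 / (\<alpha> - 1)) * \<tau> k + (1 / (\<alpha> - 1) - (1 / (\<alpha> - 1))^2)"
    unfolding \<rho>_def \<tau>_Suc by (simp add: power2_eq_square algebra_simps)
  moreover have "(1 / (\<alpha> - 1))^2 \<le> 1 / (\<alpha> - 1) * 1"
    unfolding power2_eq_square using alpha by (intro mult_left_mono) auto
  moreover have "(\<alpha> - 3) / (\<alpha> - 1)^2 * real k \<le> (1 - 2 / (\<alpha> - 1)) * \<tau> k"
  proof -
    have "real k / (\<alpha> - 1) \<le> \<tau> k" using alpha by (simp add: \<tau>_def divide_right_mono)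
    then have "(1 - 2 / (\<alpha> - 1)) * (real k / (\<alpha> - 1)) \<le> (1 - 2 / (\<alpha> - 1)) * \<tau> k"
      using alpha by (intro mult_left_mono) (auto simp: field_simps)
    then show ?thesis using alpha by (simp add: field_simps power2_eq_square)
  qed
  ultimately show ?thesis by linarith
qed

lemma \<rho>_nonneg: "0 \<le> \<rho> k"
  using \<rho>_lower[of k] alpha by (smt (verit) divide_nonneg_nonneg mult_nonneg_nonneg of_nat_0_le_iff
    zero_le_power2)

lemma energy_step:
  assumes z: "z \<in> S" and k: "k \<ge> 2"
  shows "energy z (Suc k) + \<rho> k * gap k \<le> energy z k + \<tau> (Suc k) * norm (g k) * norm (U (Suc k) - z)"
proof -
  have "(\<tau> (Suc k))^2 * gap (Suc k) + (1 / (2 * s)) * (norm (x k + \<tau> (Suc k) *\<^sub>R (x (Suc k) - x k) - z))^2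
     \<le> ((\<tau> (Suc k))^2 - \<tau> (Suc k)) * gap k + (1 / (2 * s)) * (norm (x (k - 1) + \<tau> k *\<^sub>R (x k - x (k - 1)) - z))^2
       + \<tau> (Suc k) * (g k \<bullet> (x k + \<tau> (Suc k) *\<^sub>R (x (Suc k) - x k) - z))"
    using accelerated_energy_step[OF \<tau>_ge_1 s(1), where T\<^sub>0 = "\<tau> k" and b = "x k"
        and c = "x (k - 1)" and a = "x (Suc k)"]
      gap_Suc_le_prev[OF k] gap_Suc_le_min[of k z] z k by (simp add: y_def \<theta>_eq)
  moreover have "\<tau> (Suc k) * (g k \<bullet> (U (Suc k) - z)) \<le> \<tau> (Suc k) * (norm (g k) * norm (U (Suc k) - z))"
    using \<tau>_nonneg by (intro mult_left_mono norm_cauchy_schwarz) auto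
  ultimately show ?thesis unfolding energy_def \<rho>_def U_def by (simp add: algebra_simps)
qed

lemma \<tau>_g_summable: "summable (\<lambda>k. \<tau> (Suc k) * norm (g k))"
proof (rule summable_le_const_mult[OF err, of 1])
  fix k :: nat assume "1 \<le> k"
  then have \<tau>: "\<tau> (Suc k) \<le> \<alpha> / (\<alpha> - 1) * real k"
    using alpha mult_left_mono[of 1 "real k" "\<alpha> - 1"]
    by (simp add: \<tau>_def divide_right_mono algebra_simps)
  then show "0 \<le> \<tau> (Suc k) * norm (g k) \<and> \<tau> (Suc k) * norm (g k) \<le> \<alpha> / (\<alpha> - 1) * (real k * norm (g k))"
    using \<tau>_nonneg[of "Suc k"] mult_right_mono[OF \<tau> norm_ge_zero[of "g k"]] by simp
qed

lemma energy_nonneg: "k \<ge> 2 \<Longrightarrow> 0 \<le> energy z k"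
  unfolding energy_def using gap_nonneg[of k] s by simp

lemma \<rho>_gap_nonneg: "k \<ge> 2 \<Longrightarrow> 0 \<le> \<rho> k * gap k"
  using \<rho>_nonneg gap_nonneg by (simp add: mult_nonneg_nonneg)

text \<open>The errors enter the energy estimate weighted by the distance \<open>\<parallel>U k - z\<parallel>\<close>, which is
  itself controlled by the energy; a discrete Gronwall argument closes the loop.\<close>
lemma U_bounded:
  assumes z: "z \<in> S"
  shows "\<exists>R. \<forall>k\<ge>2. norm (U k - z) \<le> R"
proof -
  define E where "E n = energy z (n + 2)" for n
  define R where "R n = norm (U (n + 2) - z)" for n
  define \<beta> where "\<beta> n = \<tau> (Suc (n + 2)) * norm (g (n + 2))" for n
  have \<beta>: "summable (\<lambda>n. 2 * s * \<beta> n)" "\<And>n. 0 \<le> 2 * s * \<beta> n"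
    using summable_ignore_initial_segment[OF \<tau>_g_summable, of 2] s \<tau>_nonneg
    by (auto simp: \<beta>_def intro: summable_mult)
  have "E (Suc n) + 0 \<le> E n + \<beta> n * R (Suc n)" for n
    using energy_step[OF z, of "n + 2"] \<rho>_gap_nonneg[of "n + 2"] by (simp add: E_def R_def \<beta>_def)
  from quasi_decreasing_le[of E "\<lambda>_. 0", OF this]
  have "2 * s * E n \<le> 2 * s * (E 0 + (\<Sum>j<n. \<beta> j * R (Suc j)))" for n
    using s by (intro mult_left_mono) auto
  also have "2 * s * (E 0 + (\<Sum>j<n. \<beta> j * R (Suc j))) = 2 * s * E 0 + (\<Sum>j<n. 2 * s * \<beta> j * R (Suc j))" for n
    by (simp add: sum_distrib_left distrib_left mult.assoc)
  finally have "2 * s * E n \<le> 2 * s * E 0 + (\<Sum>j<n. 2 * s * \<beta> j * R (Suc j))" for n .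
  moreover have "(R n)^2 \<le> 2 * s * E n" for n
    using gap_nonneg[of "n + 2"] s by (simp add: E_def R_def energy_def field_simps)
  ultimately have "(R n)^2 \<le> 2 * s * E 0 + (\<Sum>j<n. 2 * s * \<beta> j * R (Suc j))" for n
    by (meson order_trans)
  then have "R n \<le> (\<Sum>j. 2 * s * \<beta> j) + sqrt (2 * s * E 0)" for n
    using \<beta> energy_nonneg[of "0 + 2" z] s by (intro sqrt_gronwall_bound) (auto simp: R_def E_def[of 0])
  then show ?thesis unfolding R_def by (metis le_add_diff_inverse2)
qed

lemma energy_quasi_decreasing:
  assumes z: "z \<in> S"
  obtains e where "summable e" "\<And>k. 0 \<le> e k"
    "\<And>k. k \<ge> 2 \<Longrightarrow> energy z (Suc k) + \<rho> k * gap k \<le> energy z k + e k"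
proof -
  obtain R where R: "\<And>k. k \<ge> 2 \<Longrightarrow> norm (U k - z) \<le> R" using U_bounded[OF z] by blast
  then have "0 \<le> R" using norm_ge_zero order_trans by blast
  show ?thesis
  proof (rule that[of "\<lambda>k. \<tau> (Suc k) * norm (g k) * R"])
    show "summable (\<lambda>k. \<tau> (Suc k) * norm (g k) * R)" by (intro summable_mult2 \<tau>_g_summable)
    show "0 \<le> \<tau> (Suc k) * norm (g k) * R" for k using \<tau>_nonneg \<open>0 \<le> R\<close> by simp
    fix k :: nat assume "k \<ge> 2"
    moreover have "\<tau> (Suc k) * norm (g k) * norm (U (Suc k) - z) \<le> \<tau> (Suc k) * norm (g k) * R"
      using R[of "Suc k"] \<open>k \<ge> 2\<close> \<tau>_nonneg[of "Suc k"] by (intro mult_left_mono) auto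
    ultimately show "energy z (Suc k) + \<rho> k * gap k \<le> energy z k + \<tau> (Suc k) * norm (g k) * R"
      using energy_step[OF z] by fastforce
  qed
qed

lemma energy_convergent:
  assumes z: "z \<in> S"
  shows "convergent (energy z)"
proof -
  obtain e where e: "summable e" "\<And>k. 0 \<le> e k"
    "\<And>k. k \<ge> 2 \<Longrightarrow> energy z (Suc k) + \<rho> k * gap k \<le> energy z k + e k"
    using energy_quasi_decreasing[OF z] by blast
  show ?thesis
  proof (rule convergent_quasi_decreasing[where N = 2 and e = e])
    fix k :: nat assume "2 \<le> k"
    then show "energy z (Suc k) \<le> energy z k + e k" using e(3) \<rho>_gap_nonneg by fastforce
  qed (use e energy_nonneg in auto)
qed

lemma k_gap_summable: "summable (\<lambda>k. real k * gap k)"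
proof -
  obtain e where e: "summable e" "\<And>k. 0 \<le> e k"
    "\<And>k. k \<ge> 2 \<Longrightarrow> energy (SOME z. z \<in> S) (Suc k) + \<rho> k * gap k \<le> energy (SOME z. z \<in> S) k + e k"
    using energy_quasi_decreasing[OF some_in_S] by blast
  have "summable (\<lambda>k. \<rho> k * gap k)"
    by (rule summable_dissipation[where N = 2, OF e(3) \<rho>_gap_nonneg energy_nonneg e(1) e(2)])
  then show ?thesis
  proof (rule summable_le_const_mult[where N = 2])
    fix k :: nat assume k: "2 \<le> k"
    have "real k \<le> (\<alpha> - 1)^2 / (\<alpha> - 3) * \<rho> k"
      using \<rho>_lower[of k] alpha by (simp add: field_simps)
    from mult_right_mono[OF this gap_nonneg[OF k]]
    show "0 \<le> real k * gap k \<and> real k * gap k \<le> (\<alpha> - 1)^2 / (\<alpha> - 3) * (\<rho> k * gap k)"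
      using gap_nonneg[OF k] by (simp add: mult.assoc)
  qed
qed

lemma x_bounded:
  assumes z: "z \<in> S"
  shows "\<exists>X. \<forall>k\<ge>2. norm (x k - z) \<le> X"
proof -
  obtain R where R: "\<And>k. k \<ge> 2 \<Longrightarrow> norm (U k - z) \<le> R" using U_bounded[OF z] by blast
  define X where "X = max (norm (x 2 - z)) R"
  have "norm (x k - z) \<le> X" if "k \<ge> 2" for k
    using that
  proof (induction k rule: dec_induct)
    case (step k)
    define T where "T = \<tau> (Suc k)"
    have T: "T \<ge> 1" unfolding T_def by (rule \<tau>_ge_1) simp
    have "(1 / T) *\<^sub>R (U (Suc k) - z) = (1 / T) *\<^sub>R (x k - z) + (x (Suc k) - x k)"
      using T unfolding U_def T_def[symmetric] by (simp add: algebra_simps)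
    then have "x (Suc k) - z = (1 - 1 / T) *\<^sub>R (x k - z) + (1 / T) *\<^sub>R (U (Suc k) - z)"
      by (simp add: algebra_simps)
    then have "norm (x (Suc k) - z) \<le> norm ((1 - 1 / T) *\<^sub>R (x k - z)) + norm ((1 / T) *\<^sub>R (U (Suc k) - z))"
      by (metis norm_triangle_ineq)
    also have "\<dots> = (1 - 1 / T) * norm (x k - z) + (1 / T) * norm (U (Suc k) - z)"
      using T by simp
    also have "\<dots> \<le> (1 - 1 / T) * X + (1 / T) * X"
      using T step R[of "Suc k"] by (intro add_mono mult_left_mono) (auto simp: X_def)
    finally show ?case by (simp add: algebra_simps)
  qed (simp add: X_def)
  then show ?thesis by blast
qed

lemma bounded_range_x: "bounded (range x)"
proof -
  obtain X where X: "\<And>k. k \<ge> 2 \<Longrightarrow> norm (x k - (SOME z. z \<in> S)) \<le> X"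
    using x_bounded[OF some_in_S] by blast
  have "range x \<subseteq> x ` {0, 1} \<union> cball (SOME z. z \<in> S) X"
  proof
    fix u assume "u \<in> range x"
    then obtain k where "u = x k" by blast
    moreover consider "k = 0" | "k = 1" | "k \<ge> 2" by linarith
    ultimately show "u \<in> x ` {0, 1} \<union> cball (SOME z. z \<in> S) X"
      using X[of k] by cases (auto simp: dist_norm norm_minus_commute)
  qed
  then show ?thesis by (rule bounded_subset[rotated]) (auto intro: finite_imp_bounded)
qed

lemma \<tau>_\<delta>_bounded: "\<exists>B. \<forall>k\<ge>2. \<tau> (Suc k) * \<delta> (Suc k) \<le> B"
proof -
  obtain R where R: "\<And>k. k \<ge> 2 \<Longrightarrow> norm (U k - (SOME z. z \<in> S)) \<le> R"
    using U_bounded[OF some_in_S] by blast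
  obtain X where X: "\<And>k. k \<ge> 2 \<Longrightarrow> norm (x k - (SOME z. z \<in> S)) \<le> X"
    using x_bounded[OF some_in_S] by blast
  have "\<tau> (Suc k) * \<delta> (Suc k) \<le> R + X" if k: "k \<ge> 2" for k
  proof -
    have "\<tau> (Suc k) * \<delta> (Suc k) = norm ((U (Suc k) - (SOME z. z \<in> S)) - (x k - (SOME z. z \<in> S)))"
      using \<tau>_nonneg[of "Suc k"] by (simp add: \<delta>_def U_def)
    also have "\<dots> \<le> R + X"
      by (rule order_trans[OF norm_triangle_ineq4 add_mono]) (use R[of "Suc k"] X[OF k] k in auto)
    finally show ?thesis .
  qed
  then show ?thesis by blast
qed

definition "kinetic k = (\<delta> k)^2 / (2 * s)"
definition "weighted_energy k = (real k - 1)^2 * kinetic k + (real k + \<alpha> - 2)^2 * gap k"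

lemma kinetic_nonneg: "0 \<le> kinetic k"
  using s by (simp add: kinetic_def)

lemma gap_kinetic_step:
  assumes k: "k \<ge> 2"
  shows "gap (Suc k) + kinetic (Suc k) \<le> gap k + (\<theta> k)^2 * kinetic k + norm (g k) * \<delta> (Suc k)"
proof -
  have "gap (Suc k) + kinetic (Suc k) \<le> gap k + (\<theta> k)^2 * kinetic k + g k \<bullet> (x (Suc k) - x k)"
    using accelerated_increment_step[OF s(1) y_def] gap_Suc_le_prev[OF k]
    by (simp add: kinetic_def \<delta>_def)
  moreover have "g k \<bullet> (x (Suc k) - x k) \<le> norm (g k) * \<delta> (Suc k)"
    unfolding \<delta>_def by (simp add: norm_cauchy_schwarz)
  ultimately show ?thesis by linarith
qed

text \<open>Multiplying the previous step by \<open>(k + \<alpha> - 1)\<^sup>2\<close> and using \<open>(k + \<alpha> - 1) \<theta> k = k - 1\<close>.\<close>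
lemma weighted_energy_step:
  assumes k: "k \<ge> 2"
  shows "weighted_energy (Suc k) + (\<alpha> - 1) * (2 * real k + \<alpha> - 1) * kinetic (Suc k)
    \<le> weighted_energy k + (2 * real k + 2 * \<alpha> - 3) * gap k
      + (real k + \<alpha> - 1)^2 * (norm (g k) * \<delta> (Suc k))"
proof -
  define q where "q = (real k + \<alpha> - 1)^2"
  have "q * (gap (Suc k) + kinetic (Suc k)) \<le> q * (gap k + (\<theta> k)^2 * kinetic k + norm (g k) * \<delta> (Suc k))"
    using gap_kinetic_step[OF k] by (intro mult_left_mono) (auto simp: q_def)
  then have step: "q * gap (Suc k) + q * kinetic (Suc k)
      \<le> q * gap k + (q * (\<theta> k)^2) * kinetic k + q * (norm (g k) * \<delta> (Suc k))"
    by (simp add: algebra_simps)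
  have \<theta>: "q * (\<theta> k)^2 = (real k - 1)^2"
    using alpha by (simp add: q_def \<theta>_def power_divide)
  have "q * kinetic (Suc k) = (real k)^2 * kinetic (Suc k) + (\<alpha> - 1) * (2 * real k + \<alpha> - 1) * kinetic (Suc k)"
    by (simp add: q_def power2_eq_square algebra_simps)
  moreover have "q * gap k = (real k + \<alpha> - 2)^2 * gap k + (2 * real k + 2 * \<alpha> - 3) * gap k"
    by (simp add: q_def power2_eq_square algebra_simps)
  moreover have "weighted_energy (Suc k) = (real k)^2 * kinetic (Suc k) + q * gap (Suc k)"
    by (simp add: weighted_energy_def q_def algebra_simps)
  moreover have "weighted_energy k = (real k - 1)^2 * kinetic k + (real k + \<alpha> - 2)^2 * gap k"
    by (simp add: weighted_energy_def)
  ultimately have "weighted_energy (Suc k) + (\<alpha> - 1) * (2 * real k + \<alpha> - 1) * kinetic (Suc k)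
    \<le> weighted_energy k + (2 * real k + 2 * \<alpha> - 3) * gap k + q * (norm (g k) * \<delta> (Suc k))"
    using step[unfolded \<theta>] by linarith
  then show ?thesis by (simp add: q_def)
qed

lemma g_\<delta>_summable: "summable (\<lambda>k. (real k + \<alpha> - 1)^2 * (norm (g k) * \<delta> (Suc k)))"
proof -
  obtain B where B: "\<And>k. k \<ge> 2 \<Longrightarrow> \<tau> (Suc k) * \<delta> (Suc k) \<le> B" using \<tau>_\<delta>_bounded by blast
  show ?thesis
  proof (rule summable_le_const_mult[OF err, where N = 2])
    fix k :: nat assume k: "2 \<le> k"
    have \<tau>\<delta>: "(real k + \<alpha> - 1) * \<delta> (Suc k) = (\<alpha> - 1) * (\<tau> (Suc k) * \<delta> (Suc k))"
      using alpha by (simp add: \<tau>_def field_simps)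
    have "(real k + \<alpha> - 1)^2 * (norm (g k) * \<delta> (Suc k))
        = ((real k + \<alpha> - 1) * norm (g k)) * ((real k + \<alpha> - 1) * \<delta> (Suc k))"
      by (simp add: power2_eq_square algebra_simps)
    also have "\<dots> = ((real k + \<alpha> - 1) * norm (g k)) * ((\<alpha> - 1) * (\<tau> (Suc k) * \<delta> (Suc k)))"
      by (simp only: \<tau>\<delta>)
    also have "\<dots> \<le> (\<alpha> * real k * norm (g k)) * ((\<alpha> - 1) * B)"
    proof (rule mult_mono)
      show "(real k + \<alpha> - 1) * norm (g k) \<le> \<alpha> * real k * norm (g k)"
        using alpha k mult_left_mono[of 1 "real k" "\<alpha> - 1"] by (intro mult_right_mono) (auto simp: algebra_simps)
      show "(\<alpha> - 1) * (\<tau> (Suc k) * \<delta> (Suc k)) \<le> (\<alpha> - 1) * B"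
        using alpha B[OF k] by (intro mult_left_mono) auto
      show "0 \<le> (\<alpha> - 1) * (\<tau> (Suc k) * \<delta> (Suc k))"
        using alpha \<tau>_nonneg[of "Suc k"] by (simp add: \<delta>_def)
    qed (use alpha in simp)
    finally show "0 \<le> (real k + \<alpha> - 1)^2 * (norm (g k) * \<delta> (Suc k))
        \<and> (real k + \<alpha> - 1)^2 * (norm (g k) * \<delta> (Suc k)) \<le> (\<alpha> - 1) * \<alpha> * B * (real k * norm (g k))"
      by (simp add: \<delta>_def algebra_simps)
  qed
qed

lemma k_kinetic_summable: "summable (\<lambda>k. real k * kinetic (Suc k))"
proof -
  have "summable (\<lambda>k. (2 * real k + 2 * \<alpha> - 3) * gap k)"
  proof (rule summable_le_const_mult[OF k_gap_summable, where N = 2])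
    fix k :: nat assume k: "2 \<le> k"
    have "2 * real k + 2 * \<alpha> - 3 \<le> 2 * \<alpha> * real k"
      using alpha k mult_left_mono[of 1 "real k" "2 * \<alpha> - 2"] by (simp add: algebra_simps)
    from mult_right_mono[OF this gap_nonneg[OF k]]
    show "0 \<le> (2 * real k + 2 * \<alpha> - 3) * gap k
        \<and> (2 * real k + 2 * \<alpha> - 3) * gap k \<le> 2 * \<alpha> * (real k * gap k)"
      using alpha gap_nonneg[OF k] by (simp add: mult.assoc)
  qed
  then have e: "summable (\<lambda>k. (2 * real k + 2 * \<alpha> - 3) * gap k
      + (real k + \<alpha> - 1)^2 * (norm (g k) * \<delta> (Suc k)))"
    by (rule summable_add[OF _ g_\<delta>_summable])
  have "summable (\<lambda>k. (\<alpha> - 1) * (2 * real k + \<alpha> - 1) * kinetic (Suc k))"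
  proof (rule summable_dissipation[where N = 2 and E = weighted_energy, OF _ _ _ e])
    fix k :: nat assume k: "2 \<le> k"
    show "weighted_energy (Suc k) + (\<alpha> - 1) * (2 * real k + \<alpha> - 1) * kinetic (Suc k)
      \<le> weighted_energy k + ((2 * real k + 2 * \<alpha> - 3) * gap k
        + (real k + \<alpha> - 1)^2 * (norm (g k) * \<delta> (Suc k)))"
      using weighted_energy_step[OF k] by simp
    show "0 \<le> (\<alpha> - 1) * (2 * real k + \<alpha> - 1) * kinetic (Suc k)"
      using alpha kinetic_nonneg by simp
    show "0 \<le> weighted_energy k"
      using gap_nonneg[OF k] kinetic_nonneg by (simp add: weighted_energy_def)
    show "0 \<le> (2 * real k + 2 * \<alpha> - 3) * gap k + (real k + \<alpha> - 1)^2 * (norm (g k) * \<delta> (Suc k))"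
      using alpha gap_nonneg[OF k] by (simp add: \<delta>_def)
  qed
  then show ?thesis
  proof (rule summable_le_const_mult[where N = 0 and c = 1])
    fix k :: nat
    have "2 * real k + \<alpha> - 1 \<le> (\<alpha> - 1) * (2 * real k + \<alpha> - 1)"
      using alpha mult_right_mono[of 1 "\<alpha> - 1" "2 * real k + \<alpha> - 1"] by simp
    then have "real k \<le> (\<alpha> - 1) * (2 * real k + \<alpha> - 1)" using alpha by linarith
    then show "0 \<le> real k * kinetic (Suc k) \<and> real k * kinetic (Suc k) \<le> 1 * ((\<alpha> - 1) * (2 * real k + \<alpha> - 1) * kinetic (Suc k))"
      using kinetic_nonneg[of "Suc k"] by (simp add: mult_right_mono)
  qed
qed

definition "V k = gap k + kinetic k"

lemma V_nonneg: "k \<ge> 2 \<Longrightarrow> 0 \<le> V k"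
  using gap_nonneg kinetic_nonneg by (simp add: V_def add_nonneg_nonneg)

lemma V_step:
  assumes k: "k \<ge> 2"
  shows "V (Suc k) \<le> V k + norm (g k) * \<delta> (Suc k)"
proof -
  have "(\<theta> k)^2 \<le> 1" using alpha k by (simp add: \<theta>_def power_le_one abs_le_iff field_simps)
  then have "(\<theta> k)^2 * kinetic k \<le> kinetic k"
    using kinetic_nonneg mult_right_mono[of "(\<theta> k)^2" 1] by fastforce
  then show ?thesis using gap_kinetic_step[OF k] by (simp add: V_def)
qed

lemma k_V_summable: "summable (\<lambda>k. real k * V k)"
proof -
  have "summable (\<lambda>k. real (Suc k) * kinetic (Suc k))"
  proof (rule summable_le_const_mult[OF k_kinetic_summable, where N = 1 and c = 2])
    fix k :: nat assume "1 \<le> k"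
    then have "real (Suc k) \<le> 2 * real k" by simp
    from mult_right_mono[OF this kinetic_nonneg]
    show "0 \<le> real (Suc k) * kinetic (Suc k) \<and> real (Suc k) * kinetic (Suc k) \<le> 2 * (real k * kinetic (Suc k))"
      using kinetic_nonneg[of "Suc k"] by (simp add: mult.assoc)
  qed
  then have "summable (\<lambda>k. real k * kinetic k)" by (subst summable_Suc_iff[symmetric])
  then show ?thesis unfolding V_def distrib_left by (intro summable_add k_gap_summable)
qed

lemma sq_V_tendsto_0: "(\<lambda>k. (real k)^2 * V k) \<longlonglongrightarrow> 0"
proof -
  define e where "e k = (2 * real k + 1) * V k + (real k + \<alpha> - 1)^2 * (norm (g k) * \<delta> (Suc k))" for k
  have "summable (\<lambda>k. (2 * real k + 1) * V k)"
  proof (rule summable_le_const_mult[OF k_V_summable, where N = 2 and c = 3])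
    fix k :: nat assume "2 \<le> k"
    then show "0 \<le> (2 * real k + 1) * V k \<and> (2 * real k + 1) * V k \<le> 3 * (real k * V k)"
      using V_nonneg[of k] mult_right_mono[of "2 * real k + 1" "3 * real k" "V k"] by auto
  qed
  then have "summable e" unfolding e_def by (intro summable_add g_\<delta>_summable)
  have "convergent (\<lambda>k. (real k)^2 * V k)"
  proof (rule convergent_quasi_decreasing[where N = 2, OF _ _ \<open>summable e\<close>])
    fix k :: nat assume k: "2 \<le> k"
    show "0 \<le> (real k)^2 * V k" "0 \<le> e k"
      using V_nonneg[OF k] alpha by (auto simp: e_def \<delta>_def)
    have "(real (Suc k))^2 \<le> (real k + \<alpha> - 1)^2" using alpha by (intro power_mono) auto
    then have "(real (Suc k))^2 * (norm (g k) * \<delta> (Suc k)) \<le> (real k + \<alpha> - 1)^2 * (norm (g k) * \<delta> (Suc k))"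
      by (intro mult_right_mono) (auto simp: \<delta>_def)
    moreover have "(real (Suc k))^2 * V (Suc k) \<le> (real (Suc k))^2 * (V k + norm (g k) * \<delta> (Suc k))"
      using V_step[OF k] by (intro mult_left_mono) auto
    ultimately show "(real (Suc k))^2 * V (Suc k) \<le> (real k)^2 * V k + e k"
      by (simp add: e_def power2_eq_square algebra_simps)
  qed
  then obtain l where l: "(\<lambda>k. (real k)^2 * V k) \<longlonglongrightarrow> l" by (auto simp: convergent_def)
  moreover have "l = 0" using sq_weighted_limit_eq_0[OF V_nonneg k_V_summable l] by simp
  ultimately show ?thesis by simp
qed

lemma sq_gap_tendsto_0: "(\<lambda>k. (real k)^2 * gap k) \<longlonglongrightarrow> 0"
proof (rule tendsto_sandwich[OF _ _ tendsto_const sq_V_tendsto_0])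
  show "eventually (\<lambda>k. 0 \<le> (real k)^2 * gap k) sequentially"
    using eventually_ge_at_top[of 2] by eventually_elim (simp add: gap_nonneg)
  show "eventually (\<lambda>k. (real k)^2 * gap k \<le> (real k)^2 * V k) sequentially"
    by (intro always_eventually allI mult_left_mono) (auto simp: V_def kinetic_nonneg)
qed

lemma k_\<delta>_tendsto_0: "(\<lambda>k. real k * \<delta> k) \<longlonglongrightarrow> 0"
proof -
  have "(\<lambda>k. (real k)^2 * kinetic k) \<longlonglongrightarrow> 0"
  proof (rule tendsto_sandwich[OF _ _ tendsto_const sq_V_tendsto_0])
    show "eventually (\<lambda>k. 0 \<le> (real k)^2 * kinetic k) sequentially" by (simp add: kinetic_nonneg)
    show "eventually (\<lambda>k. (real k)^2 * kinetic k \<le> (real k)^2 * V k) sequentially"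
      using eventually_ge_at_top[of 2] by eventually_elim (simp add: V_def gap_nonneg)
  qed
  then have "(\<lambda>k. sqrt (2 * s * ((real k)^2 * kinetic k))) \<longlonglongrightarrow> sqrt (2 * s * 0)"
    by (intro tendsto_intros)
  moreover have "sqrt (2 * s * ((real k)^2 * kinetic k)) = real k * \<delta> k" for k
    using s by (simp add: kinetic_def \<delta>_def real_sqrt_mult)
  ultimately show ?thesis by simp
qed

lemma \<tau>_\<delta>_tendsto_0: "(\<lambda>k. \<tau> k * \<delta> k) \<longlonglongrightarrow> 0"
proof (rule tendsto_sandwich[OF _ _ tendsto_const tendsto_mult_right_zero[OF k_\<delta>_tendsto_0]])
  show "eventually (\<lambda>k. 0 \<le> \<tau> k * \<delta> k) sequentially" using \<tau>_nonneg by (simp add: \<delta>_def)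
  show "eventually (\<lambda>k. \<tau> k * \<delta> k \<le> \<alpha> / (\<alpha> - 1) * (real k * \<delta> k)) sequentially"
    using eventually_ge_at_top[of 1]
  proof eventually_elim
    case (elim k)
    have "\<tau> k * \<delta> k \<le> (\<alpha> / (\<alpha> - 1) * real k) * \<delta> k"
      using \<tau>_le[OF elim] by (rule mult_right_mono) (simp add: \<delta>_def)
    then show ?case by (simp only: mult.assoc)
  qed
qed

lemma U_dist_sq_convergent:
  assumes z: "z \<in> S"
  shows "convergent (\<lambda>k. (norm (U k - z))^2)"
proof -
  have "(\<lambda>k. (\<tau> k)^2 * gap k) \<longlonglongrightarrow> 0"
  proof (rule tendsto_sandwich[OF _ _ tendsto_const tendsto_mult_right_zero[OF sq_gap_tendsto_0]])
    show "eventually (\<lambda>k. 0 \<le> (\<tau> k)^2 * gap k) sequentially"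
      using eventually_ge_at_top[of 2] by eventually_elim (simp add: gap_nonneg)
    show "eventually (\<lambda>k. (\<tau> k)^2 * gap k \<le> (\<alpha> / (\<alpha> - 1))^2 * ((real k)^2 * gap k)) sequentially"
      using eventually_ge_at_top[of 2]
    proof eventually_elim
      case (elim k)
      have "(\<tau> k)^2 \<le> (\<alpha> / (\<alpha> - 1) * real k)^2" using \<tau>_le[of k] \<tau>_nonneg elim by (intro power_mono) auto
      from mult_right_mono[OF this gap_nonneg[OF elim]]
      show ?case by (simp only: power_mult_distrib mult.assoc)
    qed
  qed
  moreover obtain l where "energy z \<longlonglongrightarrow> l" using energy_convergent[OF z] unfolding convergent_def ..
  ultimately have "(\<lambda>k. 2 * s * (energy z k - (\<tau> k)^2 * gap k)) \<longlonglongrightarrow> 2 * s * (l - 0)"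
    by (intro tendsto_intros)
  moreover have "2 * s * (energy z k - (\<tau> k)^2 * gap k) = (norm (U k - z))^2" for k
    using s by (simp add: energy_def)
  ultimately show ?thesis unfolding convergent_def by auto
qed

lemma dist_sq_convergent:
  assumes z: "z \<in> S"
  shows "convergent (\<lambda>k. (norm (x k - z))^2)"
proof -
  obtain X where X: "\<And>k. k \<ge> 2 \<Longrightarrow> norm (x k - z) \<le> X" using x_bounded[OF z] by blast
  define d where "d k = (norm (U (Suc k) - z))^2 - (norm (x k - z))^2" for k
  define b where "b k = \<tau> (Suc k) * \<delta> (Suc k)" for k
  have "b \<longlonglongrightarrow> 0" unfolding b_def using LIMSEQ_Suc[OF \<tau>_\<delta>_tendsto_0] .
  then have "(\<lambda>k. 2 * X * b k + (b k)^2) \<longlonglongrightarrow> 2 * X * 0 + 0^2" by (intro tendsto_intros)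
  then have bound: "(\<lambda>k. 2 * X * b k + (b k)^2) \<longlonglongrightarrow> 0" by simp
  have "eventually (\<lambda>k. norm (d k) \<le> 2 * X * b k + (b k)^2) sequentially"
    using eventually_ge_at_top[of 2]
  proof eventually_elim
    case (elim k)
    define v where "v = \<tau> (Suc k) *\<^sub>R (x (Suc k) - x k)"
    have nv: "norm v = b k" using \<tau>_nonneg[of "Suc k"] by (simp add: v_def b_def \<delta>_def)
    have "d k = 2 * ((x k - z) \<bullet> v) + (norm v)^2"
      using power2_norm_add[of "x k - z" v] by (simp add: d_def U_def v_def algebra_simps)
    then have "norm (d k) \<le> 2 * (norm (x k - z) * norm v) + (norm v)^2"
      using Cauchy_Schwarz_ineq2[of "x k - z" v] by (simp add: abs_le_iff)
        (use zero_le_power2[of "norm v"] in linarith)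
    also have "\<dots> \<le> 2 * (X * norm v) + (norm v)^2"
      using X[OF elim] by (intro add_mono mult_left_mono mult_right_mono) auto
    finally show ?case by (simp add: nv)
  qed
  from Lim_null_comparison[OF this bound] have "d \<longlonglongrightarrow> 0" .
  moreover obtain l where "(\<lambda>k. (norm (U k - z))^2) \<longlonglongrightarrow> l"
    using U_dist_sq_convergent[OF z] unfolding convergent_def ..
  ultimately have "(\<lambda>k. (norm (U (Suc k) - z))^2 - d k) \<longlonglongrightarrow> l - 0"
    by (intro tendsto_diff LIMSEQ_Suc)
  then have "(\<lambda>k. (norm (x k - z))^2) \<longlonglongrightarrow> l" by (simp add: d_def)
  then show ?thesis unfolding convergent_def ..
qed

lemma sublevel_closed: "closed {u. \<Psi> u + ereal (\<Phi> u) \<le> ereal c}"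
  unfolding closed_sequential_limits
proof (intro allI impI, elim conjE)
  fix v :: "nat \<Rightarrow> 'a" and l
  assume v: "\<forall>n. v n \<in> {u. \<Psi> u + ereal (\<Phi> u) \<le> ereal c}" and vl: "v \<longlonglongrightarrow> l"
  have "\<Psi> (v n) \<le> ereal (c - \<Phi> (v n))" for n
  proof -
    have "\<Psi> (v n) + ereal (\<Phi> (v n)) \<le> ereal c" using v by blast
    then show ?thesis by (cases "\<Psi> (v n)") auto
  qed
  moreover have "(\<lambda>n. c - \<Phi> (v n)) \<longlonglongrightarrow> c - \<Phi> l"
    using has_derivative_continuous[OF grad] vl by (intro tendsto_intros) (auto simp: isCont_tendsto_compose)
  ultimately have "\<Psi> l \<le> ereal (c - \<Phi> l)" by (rule lsc_fun_seq_le[OF lsc vl])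
  then show "l \<in> {u. \<Psi> u + ereal (\<Phi> u) \<le> ereal c}"
    by (cases "\<Psi> l") auto
qed

lemma sublevel_convex: "convex {u. \<Psi> u + ereal (\<Phi> u) \<le> ereal c}"
proof (rule convexI)
  fix a b :: 'a and p q :: real
  assume a: "a \<in> {u. \<Psi> u + ereal (\<Phi> u) \<le> ereal c}" and b: "b \<in> {u. \<Psi> u + ereal (\<Phi> u) \<le> ereal c}"
    and pq: "0 \<le> p" "0 \<le> q" "p + q = 1"
  have fa: "\<Psi> a = ereal (\<psi> a)" and fb: "\<Psi> b = ereal (\<psi> b)" using a b by (auto intro: Psi_eq_psi)
  have "\<Psi> ((1 - q) *\<^sub>R a + q *\<^sub>R b) \<le> ereal (1 - q) * \<Psi> a + ereal q * \<Psi> b"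
    using cvxPsi pq unfolding convex_ereal_fun_def by auto
  then have \<Psi>: "\<Psi> (p *\<^sub>R a + q *\<^sub>R b) \<le> ereal (p * \<psi> a + q * \<psi> b)"
    using fa fb pq(3) by (simp add: eq_diff_eq[symmetric])
  have \<Phi>: "\<Phi> (p *\<^sub>R a + q *\<^sub>R b) \<le> p * \<Phi> a + q * \<Phi> b"
    using cvxPhi pq unfolding convex_on_def by auto
  have "p * (\<psi> a + \<Phi> a) + q * (\<psi> b + \<Phi> b) \<le> p * c + q * c"
    using a b fa fb pq by (intro add_mono mult_left_mono) auto
  moreover have "p * c + q * c = c" using pq(3) by (metis distrib_right mult_1)
  ultimately have "p * \<psi> a + q * \<psi> b + (p * \<Phi> a + q * \<Phi> b) \<le> c"
    by (simp add: algebra_simps)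
  then have "\<Psi> (p *\<^sub>R a + q *\<^sub>R b) + ereal (\<Phi> (p *\<^sub>R a + q *\<^sub>R b)) \<le> ereal c"
    using add_mono[OF \<Psi> ereal_less_eq(3)[THEN iffD2, OF \<Phi>]] by (simp add: order_trans)
  then show "p *\<^sub>R a + q *\<^sub>R b \<in> {u. \<Psi> u + ereal (\<Phi> u) \<le> ereal c}" by simp
qed

lemma gap_tendsto_0: "gap \<longlonglongrightarrow> 0"
proof (rule tendsto_sandwich[OF _ _ tendsto_const sq_gap_tendsto_0])
  show "eventually (\<lambda>k. 0 \<le> gap k) sequentially"
    using eventually_ge_at_top[of 2] by eventually_elim (rule gap_nonneg)
  show "eventually (\<lambda>k. gap k \<le> (real k)^2 * gap k) sequentially"
    using eventually_ge_at_top[of 2]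
  proof eventually_elim
    case (elim k)
    then have "1 * gap k \<le> (real k)^2 * gap k"
      using gap_nonneg[OF elim] by (intro mult_right_mono) (auto simp: one_le_power)
    then show ?case by simp
  qed
qed

lemma tail_hull_common_point_in_S:
  assumes w: "\<forall>n. w \<in> tail_hull x A n"
  shows "w \<in> S"
proof -
  have le: "\<Psi> w + ereal (\<Phi> w) \<le> ereal (Fmin + e)" if "e > 0" for e
  proof -
    obtain N where N: "\<And>k. k \<ge> N \<Longrightarrow> gap k < e"
      using order_tendstoD(2)[OF gap_tendsto_0 \<open>e > 0\<close>] by (auto simp: eventually_sequentially)
    have "tail_hull x A (max N 2) \<subseteq> {u. \<Psi> u + ereal (\<Phi> u) \<le> ereal (Fmin + e)}"
    proof (rule tail_hull_subset[OF _ sublevel_closed sublevel_convex])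
      fix k assume "max N 2 \<le> k"
      then have "\<Psi> (x k) + ereal (\<Phi> (x k)) = ereal (Fmin + gap k)" and "gap k < e"
        using x_finite[of k] N[of k] by (auto simp: gap_def F_def)
      then show "x k \<in> {u. \<Psi> u + ereal (\<Phi> u) \<le> ereal (Fmin + e)}" by simp
    qed
    then show ?thesis using w by blast
  qed
  have "\<Psi> w \<noteq> \<infinity>" using le[of 1] by auto
  then have fw: "\<Psi> w = ereal (\<psi> w)" by (rule Psi_eq_psi)
  have "\<psi> w + \<Phi> w \<le> Fmin" by (rule field_le_epsilon) (use le fw in simp)
  then have "\<Psi> w + ereal (\<Phi> w) \<le> ereal Fmin" using fw by simp
  then show "w \<in> S" unfolding S_def using Fmin_le order_trans by blast
qed

lemma sq_objective_gap_tendsto_0: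
  "(\<lambda>k. ereal ((real k)^2) * ((\<Psi> (x k) + ereal (\<Phi> (x k))) - (INF u. \<Psi> u + ereal (\<Phi> u)))) \<longlonglongrightarrow> 0"
proof (rule Lim_transform_eventually)
  show "(\<lambda>k. ereal ((real k)^2 * gap k)) \<longlonglongrightarrow> 0"
    using tendsto_ereal[OF sq_gap_tendsto_0] by (simp add: zero_ereal_def)
  show "eventually (\<lambda>k. ereal ((real k)^2 * gap k)
      = ereal ((real k)^2) * ((\<Psi> (x k) + ereal (\<Phi> (x k))) - (INF u. \<Psi> u + ereal (\<Phi> u)))) sequentially"
    using eventually_ge_at_top[of 2]
  proof eventually_elim
    case (elim k)
    show ?case unfolding INF_eq_Fmin x_finite[OF elim] by (simp add: gap_def F_def)
  qed
qed

lemma k_step_tendsto_0: "(\<lambda>k. real k * norm (x (k + 1) - x k)) \<longlonglongrightarrow> 0"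
proof (rule tendsto_sandwich[OF _ _ tendsto_const LIMSEQ_Suc[OF k_\<delta>_tendsto_0]])
  show "eventually (\<lambda>k. real k * norm (x (k + 1) - x k) \<le> real (Suc k) * \<delta> (Suc k)) sequentially"
    by (simp add: \<delta>_def mult_right_mono)
qed simp

lemma weakly_converges_to_minimizer:
  "\<exists>z. (\<forall>u. \<Psi> z + ereal (\<Phi> z) \<le> \<Psi> u + ereal (\<Phi> u)) \<and> weakly_converges x z"
proof -
  obtain z where "z \<in> S" "weakly_converges x z"
    using opial_weak_convergence[of x S, OF bounded_range_x dist_sq_convergent]
      tail_hull_common_point_in_S by blast
  then show ?thesis unfolding S_def by blast
qed

end

theorem theorem3:
  fixes \<Psi> :: "'a::{real_inner, complete_space} \<Rightarrow> ereal"
    and \<Phi> :: "'a \<Rightarrow> real" and gradPhi :: "'a \<Rightarrow> 'a"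
    and L s \<alpha> :: real
    and x g :: "nat \<Rightarrow> 'a"
  assumes proper: "proper_fun \<Psi>" and lsc: "lsc_fun \<Psi>" and cvxPsi: "convex_ereal_fun \<Psi>"
    and cvxPhi: "convex_on UNIV \<Phi>"
    and grad: "\<And>u. (\<Phi> has_derivative (\<lambda>h. gradPhi u \<bullet> h)) (at u)"
    and grad_cont: "continuous_on UNIV gradPhi"
    and L_pos: "L > 0"
    and Lip: "\<And>u v. norm (gradPhi u - gradPhi v) \<le> L * norm (u - v)"
    and S_nonempty: "\<exists>z. \<forall>u. \<Psi> z + ereal (\<Phi> z) \<le> \<Psi> u + ereal (\<Phi> u)"
    and alpha: "\<alpha> > 3"
    and s: "0 < s" "s < 1 / L"
    and scheme: "\<And>k. k \<ge> 1 \<Longrightarrow>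
        (let y = x k + ((real k - 1) / (real k + \<alpha> - 1)) *\<^sub>R (x k - x (k - 1))
         in x (k + 1) = prox s \<Psi> (y - s *\<^sub>R (gradPhi y - g k)))"
    and err: "summable (\<lambda>k. real k * norm (g k))"
  shows "((\<lambda>k. ereal ((real k)^2) *
             ((\<Psi> (x k) + ereal (\<Phi> (x k))) - (INF u. \<Psi> u + ereal (\<Phi> u)))) \<longlonglongrightarrow> 0)
       \<and> ((\<lambda>k. real k * norm (x (k + 1) - x k)) \<longlonglongrightarrow> 0)
       \<and> (\<exists>z. (\<forall>u. \<Psi> z + ereal (\<Phi> z) \<le> \<Psi> u + ereal (\<Phi> u)) \<and> weakly_converges x z)"
proof -
  interpret inexact_accelerated_forward_backward \<Psi> \<Phi> gradPhi L s \<alpha> x g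
    using proper lsc cvxPsi cvxPhi grad L_pos Lip S_nonempty alpha s scheme err by unfold_locales
  show ?thesis
    using sq_objective_gap_tendsto_0 k_step_tendsto_0 weakly_converges_to_minimizer by blast
qed

end
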